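(* Let $n\geq 3$. In the hypercube $Q_n$, the following sets of edges $M[X,Y]$ are perfect matchings between the vertex sets $X$ and $Y$: (i) $M^0[C_{h,i},C_{h,i+1}]$ for every $0\le i<h\le n$; (ii) $M^1[C^-_{1,0},C^-_{1,1}]$, $M^1[C^+_{h,i},C^-_{h+2,i+2}]$, and $M^1[C^+_{h,i},C^-_{h+2,i}]$ for every $0\le i\le h\le n-2$; (iii) $Z^{02}[C^-_{h,i-1},C^-_{h,i}]$ for every $1<i<h\le n$, where $Z^{02}:=\{\{x,z(x)\}\mid x\in C^-_{h,i}\}$.
   Context: $Q_n$ is the hypercube on $\{0,1\}^n$ (adjacent iff differing in one position); level $k$ is $L_{n,k}$, the set of strings with exactly $k$ ones. $D$ denotes the set of all bitstrings (including the empty string $\varepsilon$) with equally many $0$s and $1$s in which every prefix has at least as many $0$s as $1$s. Every nonempty $x\in D$ can be written uniquely as $x=0\,u\,1\,v$ with $u,v\in D$; then $\mathrm{rot}(x):=u\,0\,v\,1$; set $\mathrm{rot}(\varepsilon):=\varepsilon$. Every $x\in\{0,1\}^n$ can be written uniquely as $x=u_0\,1\,u_1\,1\cdots u_{i-1}\,1\,u_i\,0\,u_{i+1}\,0\cdots 0\,u_h$ with $u_0,\ldots,u_h\in D$ (that is, $i$ separating $1$s followed by $h-i$ separating $0$s); $C_{h,i}$ is the set of all $x$ with such a representation for given $h$ and $i$, $C^-_{h,i}\subseteq C_{h,i}$ those with $u_i=\varepsilon$ and $C^+_{h,i}$ those with $u_i\ne\varepsilon$. For $x\in C^-_{h,i}$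 with $1<i<h$, write $x=u_0\,1\cdots u_{i-2}\,1\,u_{i-1}\,1\,0\,u_{i+1}\,0\cdots0\,u_h$ and define $z(x):=u_0\,1\cdots u_{i-2}\,1\,0\,\mathrm{rot}(u_{i-1})\,0\,u_{i+1}\,0\cdots 0\,u_h$. Lexical matchings: interpret a bitstring as a lattice path from $(0,0)$, each $0$ a step $(+1,-1)$ and each $1$ a step $(+1,+1)$. For $x\in L_{n,k}$ let $x^{\searrow}$ be obtained by appending $0$-steps until the path ends at height $-1$ (if $x$ ends at height less than $-1$, $x^\searrow:=x$). Scan the down-steps of $x^\searrow$ row by row from top to bottom, and from right to left within each row, numbering them $0,1,2,\ldots$. If the $p$-th down-step found lies within the part $x$ (not in the appended part), let $M^{p,\uparrow}_{n,k}(x)\in L_{n,k+1}$ be obtained from $x$ by flipping that step (bit) to $1$; otherwise $x$ is unmatched. The $p$-lexical matching $M^p$ is the set of all edges $\{x,M^{p,\uparrow}_{n,k}(x)\}$ over all $0\le k<n$ and all matched $x\in L_{n,k}$ (this is a matching). For a set $M$ of edges and disjoint vertex sets $X,Y$, $M[X,Y]$ denotes the set of edges of $M$ with one end in $X$ and the other in $Y$. *)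

theory Defs
  imports Main
begin

text \<open>Bitstrings are boolean lists: True = bit 1 (up-step), False = bit 0 (down-step).
  The vertex set of Q_n is the set of lists of length n.\<close>

definition height :: "bool list \<Rightarrow> int" where
  "height w = (\<Sum>b\<leftarrow>w. if b then 1 else -1)"

definition Dyck :: "bool list set" where
  "Dyck = {w. height w = 0 \<and> (\<forall>k\<le>length w. height (take k w) \<le> 0)}"

definition rot :: "bool list \<Rightarrow> bool list" where
  "rot x = (if x = [] then [] else
     (THE w. \<exists>u v. u \<in> Dyck \<and> v \<in> Dyck \<and> x = False # u @ True # v \<and>
                   w = u @ False # v @ [True]))"

text \<open>join i [u_0,...,u_h] = u_0 s_1 u_1 s_2 ... s_h u_h with s_j = 1 iff j \<le> i.\<close>
definition join :: "nat \<Rightarrow> bool list list \<Rightarrow> bool list" where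
  "join i us = concat (map (\<lambda>j. (if j = 0 then [] else [j \<le> i]) @ us ! j) [0..<length us])"

definition C :: "nat \<Rightarrow> nat \<Rightarrow> nat \<Rightarrow> bool list set" where
  "C n h i = {x. length x = n \<and> i \<le> h \<and>
      (\<exists>us. length us = Suc h \<and> set us \<subseteq> Dyck \<and> x = join i us)}"

definition Cminus :: "nat \<Rightarrow> nat \<Rightarrow> nat \<Rightarrow> bool list set" where
  "Cminus n h i = {x. length x = n \<and> i \<le> h \<and>
      (\<exists>us. length us = Suc h \<and> set us \<subseteq> Dyck \<and> x = join i us \<and> us ! i = [])}"

definition Cplus :: "nat \<Rightarrow> nat \<Rightarrow> nat \<Rightarrow> bool list set" where
  "Cplus n h i = {x. length x = n \<and> i \<le> h \<and>
      (\<exists>us. length us = Suc h \<and> set us \<subseteq> Dyck \<and> x = join i us \<and> us ! i \<noteq> [])}"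

definition zmap :: "nat \<Rightarrow> nat \<Rightarrow> bool list \<Rightarrow> bool list" where
  "zmap h i x = (THE y. \<exists>us. length us = Suc h \<and> set us \<subseteq> Dyck \<and> x = join i us \<and> us ! i = [] \<and>
      y = join (i - 1) (us[i - 1 := [], i := rot (us ! (i - 1))]))"

definition Z02 :: "nat \<Rightarrow> nat \<Rightarrow> nat \<Rightarrow> bool list set set" where
  "Z02 n h i = {{x, zmap h i x} | x. x \<in> Cminus n h i}"

definition dpath :: "bool list \<Rightarrow> bool list" where
  "dpath x = (if height x \<ge> -1 then x @ replicate (nat (height x + 1)) False else x)"

definition downs :: "bool list \<Rightarrow> nat set" where
  "downs w = {j. j < length w \<and> \<not> w ! j}"

text \<open>scan_before w j' j: down-step j' is scanned before down-step j
  (higher row first; within a row, right to left).\<close>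
definition scan_before :: "bool list \<Rightarrow> nat \<Rightarrow> nat \<Rightarrow> bool" where
  "scan_before w j' j \<longleftrightarrow> height (take j' w) > height (take j w) \<or>
     (height (take j' w) = height (take j w) \<and> j' > j)"

definition Mlex :: "nat \<Rightarrow> nat \<Rightarrow> bool list set set" where
  "Mlex n p = {{x, x[j := True]} | x j. length x = n \<and> j < length x \<and> j \<in> downs (dpath x) \<and>
      card {j' \<in> downs (dpath x). scan_before (dpath x) j' j} = p}"

definition hyp_adj :: "bool list \<Rightarrow> bool list \<Rightarrow> bool" where
  "hyp_adj x y \<longleftrightarrow> length x = length y \<and> card {j. j < length x \<and> x ! j \<noteq> y ! j} = 1"

definition edges_between :: "bool list set set \<Rightarrow> bool list set \<Rightarrow> bool list set \<Rightarrow> bool list set set" where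
  "edges_between M X Y = {e \<in> M. \<exists>x\<in>X. \<exists>y\<in>Y. e = {x, y}}"

definition perfect_matching_between :: "bool list set set \<Rightarrow> bool list set \<Rightarrow> bool list set \<Rightarrow> bool" where
  "perfect_matching_between M X Y \<longleftrightarrow> X \<inter> Y = {} \<and>
     (\<forall>e\<in>M. \<exists>x\<in>X. \<exists>y\<in>Y. e = {x, y} \<and> hyp_adj x y) \<and>
     (\<forall>v\<in>X \<union> Y. \<exists>!e. e \<in> M \<and> v \<in> e)"

end

(*
  Read a bitstring as a lattice path. Then x lies in C_{h,i} iff its maximal prefix height is i
  and its final height is 2i - h, and in C^-_{h,i} iff it attains the maximum i only once: the
  separating 1s are the first up-steps to the levels 1, ..., i, the separating 0s the last
  down-steps from the levels i, i - 1, ..., 2i - h + 1.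

  In each case the step flipped by the lexical matching is described by the visits of one level.
  M^0 flips the last step leaving the maximum (no down-step is scanned before it). M^1 flips, on
  C^+_{h,i}, the step at the second-to-last visit of the maximum (only the last visit is scanned
  before it); on C^-_{h+2,i}, the last step leaving the level just below the unique peak (only the
  peak is scanned before it); on C^-_{1,0}, the step at the second-to-last visit of level -1 (only
  the first step is scanned before it). Undoing the first up-step to the new maximum, resp. the
  up-step completing the first return to the peak, inverts these maps, so they are bijections
  between the classes. For Z^{02}, the factorization into Dyck words is unique, rot is a bijection
  of Dyck words, and u_{i-1} 1 and 0 rot(u_{i-1}) differ in exactly one bit.
*)
theory Submission
  imports Defs
begin

section \<open>Lattice paths and Dyck words\<close>

definition prefix_height :: "bool list \<Rightarrow> nat \<Rightarrow> int" where
  "prefix_height x k = height (take k x)"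

lemma height_Nil [simp]: "height [] = 0"
  by (simp add: height_def)

lemma height_Cons [simp]: "height (b # w) = (if b then 1 else -1) + height w"
  by (simp add: height_def)

lemma height_append [simp]: "height (v @ w) = height v + height w"
  by (simp add: height_def)

lemma height_list_update:
  "j < length x \<Longrightarrow>
   height (x[j := b]) = height x + (if b then 1 else -1) - (if x ! j then 1 else -1)"
  by (induction x arbitrary: j) (auto split: nat.split)

lemma prefix_height_0 [simp]: "prefix_height x 0 = 0"
  by (simp add: prefix_height_def)

lemma prefix_height_Nil [simp]: "prefix_height [] k = 0"
  by (simp add: prefix_height_def)

lemma prefix_height_Suc:
  "k < length x \<Longrightarrow> prefix_height x (Suc k) = prefix_height x k + (if x ! k then 1 else -1)"
  by (simp add: prefix_height_def take_Suc_conv_app_nth)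

lemma down_step_iff:
  "j < length x \<Longrightarrow> \<not> x ! j \<longleftrightarrow> prefix_height x (Suc j) < prefix_height x j"
  by (simp add: prefix_height_Suc)

lemma prefix_height_beyond: "length x \<le> k \<Longrightarrow> prefix_height x k = height x"
  by (simp add: prefix_height_def)

lemma prefix_height_length [simp]: "prefix_height x (length x) = height x"
  by (simp add: prefix_height_def)

lemma visit_within_length: "prefix_height x k = c \<Longrightarrow> \<exists>k'\<le>length x. prefix_height x k' = c"
  by (metis le_refl nat_le_linear prefix_height_beyond prefix_height_length)

lemma prefix_height_append:
  "prefix_height (v @ w) k =
     (if k \<le> length v then prefix_height v k else height v + prefix_height w (k - length v))"
  by (simp add: prefix_height_def)

lemma prefix_height_Cons:
  "prefix_height (b # w) k = (if k = 0 then 0 else (if b then 1 else -1) + prefix_height w (k - 1))"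
  by (cases k) (simp_all add: prefix_height_def)

lemma prefix_height_take: "prefix_height (take m x) k = prefix_height x (min k m)"
  by (simp add: prefix_height_def min_def)

lemma prefix_height_drop:
  "m \<le> length x \<Longrightarrow> prefix_height (drop m x) k = prefix_height x (m + k) - prefix_height x m"
  by (simp add: prefix_height_def take_add)

lemma prefix_height_list_update:
  "j < length x \<Longrightarrow> prefix_height (x[j := b]) k =
     prefix_height x k + (if j < k then (if b then 1 else -1) - (if x ! j then 1 else -1) else 0)"
  by (cases "j < k") (simp_all add: prefix_height_def take_update_swap height_list_update list_update_beyond)

lemma prefix_height_flip_up:
  "j < length x \<Longrightarrow> \<not> x ! j \<Longrightarrow>
   prefix_height (x[j := True]) k = prefix_height x k + (if j < k then 2 else 0)"
  by (simp add: prefix_height_list_update)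

lemma prefix_height_flip_down:
  "j < length x \<Longrightarrow> x ! j \<Longrightarrow>
   prefix_height (x[j := False]) k = prefix_height x k - (if j < k then 2 else 0)"
  by (simp add: prefix_height_list_update)

lemma height_flip_up: "j < length x \<Longrightarrow> \<not> x ! j \<Longrightarrow> height (x[j := True]) = height x + 2"
  by (simp add: height_list_update)

lemma last_in_range:
  fixes Q :: "nat \<Rightarrow> bool"
  assumes "Q k" "k \<le> N"
  shows "\<exists>t. k \<le> t \<and> t \<le> N \<and> Q t \<and> (\<forall>k'. t < k' \<and> k' \<le> N \<longrightarrow> \<not> Q k')"
proof -
  obtain t where "k \<le> t \<and> t \<le> N \<and> Q t"
    and greatest: "\<And>k'. k \<le> k' \<and> k' \<le> N \<and> Q k' \<Longrightarrow> k' \<le> t"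
    using ex_has_greatest_nat[of "\<lambda>t. k \<le> t \<and> t \<le> N \<and> Q t" k id "Suc N"] assms by auto
  then show ?thesis
    using greatest by (metis le_trans not_le order.strict_implies_order)
qed

lemma first_up_crossing:
  assumes "prefix_height y a < c" "c \<le> prefix_height y k" "a \<le> k"
  shows "\<exists>j. a \<le> j \<and> j < k \<and> j < length y \<and> y ! j \<and> prefix_height y j = c - 1 \<and>
             (\<forall>k'. a \<le> k' \<and> k' \<le> j \<longrightarrow> prefix_height y k' < c)"
proof -
  obtain m where m: "a \<le> m" "c \<le> prefix_height y m"
    and below: "\<And>k'. k' < m \<Longrightarrow> \<not> (a \<le> k' \<and> c \<le> prefix_height y k')"
    using exists_least_iff[of "\<lambda>m. a \<le> m \<and> c \<le> prefix_height y m"] assms(2,3) by blast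
  have "m \<le> k"
  proof (rule ccontr)
    assume "\<not> m \<le> k"
    then show False
      using below[of k] assms(2,3) by simp
  qed
  have "a \<noteq> m"
    using m assms(1) by auto
  then obtain j where j: "m = Suc j" "a \<le> j"
    using m(1) by (cases m) auto
  have before: "prefix_height y k' < c" if "a \<le> k'" "k' \<le> j" for k'
    using below[of k'] that j by simp
  have "j < length y"
    using before[of j] m j prefix_height_beyond[of y j] prefix_height_beyond[of y m] by fastforce
  moreover from this have "y ! j \<and> prefix_height y j = c - 1"
    using prefix_height_Suc[of j y] before[of j] m j by (auto split: if_splits)
  ultimately show ?thesis
    using before j \<open>m \<le> k\<close> by auto
qed

lemma last_down_crossing:
  assumes "c \<le> prefix_height x k" "prefix_height x N < c" "k \<le> N"
  shows "\<exists>j. k \<le> j \<and> j < N \<and> j < length x \<and> \<not> x ! j \<and> prefix_height x j = c \<and>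
             (\<forall>k'. j < k' \<and> k' \<le> N \<longrightarrow> prefix_height x k' < c)"
proof -
  obtain m where m: "k \<le> m" "m \<le> N" "c \<le> prefix_height x m"
    and after: "\<forall>k'. m < k' \<and> k' \<le> N \<longrightarrow> prefix_height x k' < c"
    using last_in_range[of "\<lambda>m. c \<le> prefix_height x m" k N] assms(1,3) by (auto simp: not_le)
  have "m < N"
    using m assms(2) by (cases "m = N") auto
  have "m < length x"
  proof (rule ccontr)
    assume "\<not> m < length x"
    then have "prefix_height x (Suc m) = prefix_height x m"
      by (simp add: prefix_height_beyond)
    then show False
      using after m(3) \<open>m < N\<close> by (metis Suc_leI lessI not_le)
  qed
  moreover from this have "\<not> x ! m \<and> prefix_height x m = c"
    using prefix_height_Suc[of m x] after m(3) \<open>m < N\<close> by (auto simp: Suc_le_eq split: if_splits)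
  ultimately show ?thesis
    using m(1) \<open>m < N\<close> after by (intro exI[of _ m]) auto
qed

lemma Dyck_iff: "w \<in> Dyck \<longleftrightarrow> height w = 0 \<and> (\<forall>k. prefix_height w k \<le> 0)"
proof -
  have "(\<forall>k\<le>length w. height (take k w) \<le> 0) \<longleftrightarrow> (\<forall>k. prefix_height w k \<le> 0)"
    by (metis nat_le_linear prefix_height_beyond prefix_height_def prefix_height_length)
  then show ?thesis
    by (simp add: Dyck_def)
qed

lemma Dyck_Nil [simp]: "[] \<in> Dyck"
  by (simp add: Dyck_iff prefix_height_def)

lemma Dyck_height: "u \<in> Dyck \<Longrightarrow> height u = 0"
  by (simp add: Dyck_iff)

lemma Dyck_prefix_height: "u \<in> Dyck \<Longrightarrow> prefix_height u k \<le> 0"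
  by (simp add: Dyck_iff)

lemma prefix_height_Dyck_append:
  "u \<in> Dyck \<Longrightarrow> prefix_height (u @ b # r) k =
     (if k \<le> length u then prefix_height u k
      else (if b then 1 else -1) + prefix_height r (k - length u - 1))"
  by (simp add: prefix_height_append prefix_height_Cons Dyck_height)

lemma Dyck_True_split:
  assumes "1 \<le> prefix_height x k"
  shows "\<exists>a r. a \<in> Dyck \<and> x = a @ True # r"
proof -
  obtain j where j: "j < length x" "x ! j" "prefix_height x j = 0"
    and below: "\<forall>k'\<le>j. prefix_height x k' < 1"
    using first_up_crossing[of x 0 1 k] assms by auto
  have "take j x \<in> Dyck"
    using j(3) below by (auto simp: Dyck_iff prefix_height_take min_def prefix_height_def[symmetric])
  then show ?thesis
    using id_take_nth_drop[OF j(1)] j(2) by metis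
qed

lemma Dyck_True_split_peak:
  assumes "\<forall>k. prefix_height x k \<le> c" "prefix_height x k = c" "0 < c"
  shows "\<exists>a r. a \<in> Dyck \<and> x = a @ True # r \<and>
           (\<forall>l. prefix_height r l \<le> c - 1) \<and> (\<exists>l. prefix_height r l = c - 1)"
proof -
  obtain a r where a: "a \<in> Dyck" and x: "x = a @ True # r"
    using Dyck_True_split[of x k] assms(2,3) by auto
  have ph: "prefix_height x (Suc (length a + l)) = 1 + prefix_height r l" for l
    using a by (simp add: x prefix_height_Dyck_append)
  have "length a < k"
    using assms(2,3) a Dyck_prefix_height[OF a, of k] by (auto simp: x prefix_height_Dyck_append split: if_splits)
  then have "prefix_height r (k - length a - 1) = c - 1"
    using assms(2) ph[of "k - length a - 1"] by simp
  moreover have "prefix_height r l \<le> c - 1" for l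
    using assms(1) ph[of l] by (metis add.commute le_diff_eq)
  ultimately show ?thesis
    using a x by blast
qed

lemma Dyck_False_split:
  assumes "\<forall>k. prefix_height x k \<le> 0" "height x < 0"
  shows "\<exists>a r. a \<in> Dyck \<and> x = a @ False # r \<and> (\<forall>k. prefix_height r k \<le> 0) \<and>
                height r = height x + 1"
proof -
  obtain j where j: "j < length x" "\<not> x ! j" "prefix_height x j = 0"
    and after: "\<forall>k'. j < k' \<and> k' \<le> length x \<longrightarrow> prefix_height x k' < 0"
    using last_down_crossing[of 0 x 0 "length x"] assms by auto
  define a r where "a = take j x" and "r = drop (Suc j) x"
  have x: "x = a @ False # r"
    using id_take_nth_drop[OF j(1)] j(2) by (simp add: a_def r_def)
  have a: "a \<in> Dyck"
    using j(1,3) assms(1) by (simp add: Dyck_iff a_def prefix_height_take prefix_height_def[symmetric])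
  have "prefix_height r k \<le> 0" for k
  proof -
    have "prefix_height x (Suc j + k) < 0"
      using after assms(2) prefix_height_beyond[of x "Suc j + k"] by (cases "Suc j + k \<le> length x") auto
    then show ?thesis
      using j by (simp add: r_def prefix_height_drop prefix_height_Suc)
  qed
  moreover have "height r = height x + 1"
    using x a by (simp add: Dyck_height)
  ultimately show ?thesis
    using x a by blast
qed

lemma Dyck_split_unique:
  assumes "a \<in> Dyck" "a' \<in> Dyck" "a @ b # r = a' @ b' # r'"
    and "\<not> b \<Longrightarrow> \<forall>k. prefix_height r k \<le> 0" "\<not> b' \<Longrightarrow> \<forall>k. prefix_height r' k \<le> 0"
  shows "a = a' \<and> r = r'"
proof -
  have False if "a \<in> Dyck" "a' \<in> Dyck" "a @ b # r = a' @ b' # r'" "length a < length a'"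
    and "\<not> b \<Longrightarrow> \<forall>k. prefix_height r k \<le> 0" for a a' b b' r r'
  proof -
    define m where "m = length a' - length a - 1"
    have a': "a' = a @ b # take m r"
      using arg_cong[OF that(3), of "take (length a')"] that(4) by (simp add: m_def take_Cons')
    show False
    proof (cases b)
      case True
      then have "prefix_height a' (Suc (length a)) = 1"
        using a' that(1) by (simp add: prefix_height_Dyck_append)
      then show False
        using Dyck_prefix_height[OF that(2)] by (metis not_one_le_zero)
    next
      case False
      have "prefix_height r m = 1"
        using Dyck_height[OF that(1)] Dyck_height[OF that(2)] a' False by (simp add: prefix_height_def)
      moreover have "prefix_height r m \<le> 0"
        using that(5) False by blast
      ultimately show False
        by simp
    qed
  qed
  then have "length a = length a'"
    using assms by (metis linorder_neqE_nat)
  then show ?thesis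
    using assms(3) by simp
qed

section \<open>The classes C, C^- and C^+ as lattice paths\<close>

lemma join_Cons: "join i (u # us) = u @ concat (map (\<lambda>j. (Suc j \<le> i) # us ! j) [0..<length us])"
  unfolding join_def by (simp add: upt_conv_Cons map_Suc_upt[symmetric] comp_def del: upt_Suc)

lemma join_Nil [simp]: "join i [] = []"
  by (simp add: join_def)

lemma join_single [simp]: "join i [u] = u"
  by (simp add: join_Cons)

lemma join_Cons_Cons [simp]: "join i (u # v # us) = u @ (0 < i) # join (i - 1) (v # us)"
  by (simp add: join_Cons upt_conv_Cons map_Suc_upt[symmetric] comp_def del: upt_Suc)
    (intro conjI arg_cong[where f = concat] map_cong, auto)

lemma join_height:
  "set us \<subseteq> Dyck \<Longrightarrow> i < length us \<Longrightarrow> height (join i us) = 2 * int i + 1 - int (length us)"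
proof (induction us arbitrary: i rule: induct_list012)
  case (3 u v us)
  then show ?case
    by (cases i) (auto simp: Dyck_height)
qed (auto simp: Dyck_height)

lemma join_prefix_height_le:
  "set us \<subseteq> Dyck \<Longrightarrow> i < length us \<Longrightarrow> prefix_height (join i us) k \<le> int i"
proof (induction us arbitrary: i k rule: induct_list012)
  case (3 u v us)
  have "prefix_height (join (i - 1) (v # us)) (k - length u - 1) \<le> int (i - 1)"
    using "3.IH"(2) "3.prems" by simp
  then show ?case
    using "3.prems" Dyck_prefix_height[of u k] by (auto simp: prefix_height_Dyck_append)
qed (auto simp: Dyck_prefix_height)

lemma join_reaches:
  "set us \<subseteq> Dyck \<Longrightarrow> i < length us \<Longrightarrow> \<exists>k. prefix_height (join i us) k = int i"
proof (induction us arbitrary: i rule: induct_list012)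
  case (3 u v us)
  show ?case
  proof (cases i)
    case (Suc i')
    then obtain k where "prefix_height (join i' (v # us)) k = int i'"
      using "3.IH"(2) "3.prems" by auto
    then have "prefix_height (join i (u # v # us)) (Suc (length u + k)) = int i"
      using "3.prems" Suc by (simp add: prefix_height_Dyck_append)
    then show ?thesis ..
  qed (auto intro: exI[of _ 0])
qed (auto intro: exI[of _ 0])

definition visits_twice :: "bool list \<Rightarrow> int \<Rightarrow> bool" where
  "visits_twice x c \<longleftrightarrow>
     (\<exists>k1 k2. k1 < k2 \<and> k2 \<le> length x \<and> prefix_height x k1 = c \<and> prefix_height x k2 = c)"

lemma visits_twiceI:
  "k1 < k2 \<Longrightarrow> k2 \<le> length x \<Longrightarrow> prefix_height x k1 = c \<Longrightarrow> prefix_height x k2 = c \<Longrightarrow>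
   visits_twice x c"
  unfolding visits_twice_def by blast

lemma visits_onceD:
  "\<not> visits_twice x c \<Longrightarrow> k1 \<le> length x \<Longrightarrow> k2 \<le> length x \<Longrightarrow>
   prefix_height x k1 = c \<Longrightarrow> prefix_height x k2 = c \<Longrightarrow> k1 = k2"
  by (metis visits_twiceI linorder_neqE_nat)

lemma visits_twice_Dyck: "u \<in> Dyck \<Longrightarrow> visits_twice u 0 \<longleftrightarrow> u \<noteq> []"
  by (auto simp: Dyck_height intro: visits_twiceI[of 0 "length u"]) (auto simp: visits_twice_def)

lemma visits_twice_Dyck_False:
  assumes "u \<in> Dyck" "\<forall>k. prefix_height r k \<le> 0"
  shows "visits_twice (u @ False # r) 0 \<longleftrightarrow> u \<noteq> []"
proof
  assume "visits_twice (u @ False # r) 0"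
  then obtain k1 k2 where "k1 < k2" "prefix_height (u @ False # r) k2 = 0"
    unfolding visits_twice_def by blast
  moreover have "k2 \<le> length u"
    using calculation(2) assms(2)[rule_format, of "k2 - length u - 1"]
    by (auto simp: prefix_height_Dyck_append[OF assms(1)] split: if_splits)
  ultimately show "u \<noteq> []"
    by auto
next
  assume "u \<noteq> []"
  then show "visits_twice (u @ False # r) 0"
    using assms(1) by (intro visits_twiceI[of 0 "length u"]) (auto simp: prefix_height_Dyck_append Dyck_height)
qed

lemma visits_twice_Dyck_True:
  assumes "u \<in> Dyck" "0 \<le> c"
  shows "visits_twice (u @ True # r) (c + 1) \<longleftrightarrow> visits_twice r c"
proof -
  have ph: "prefix_height (u @ True # r) k =
      (if k \<le> length u then prefix_height u k else 1 + prefix_height r (k - length u - 1))" for k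
    using assms(1) by (simp add: prefix_height_Dyck_append)
  have low: "prefix_height (u @ True # r) k \<noteq> c + 1" if "k \<le> length u" for k
    using Dyck_prefix_height[OF assms(1), of k] assms(2) that by (simp add: ph)
  show ?thesis
  proof
    assume "visits_twice (u @ True # r) (c + 1)"
    then obtain k1 k2 where k: "k1 < k2" "k2 \<le> length u + Suc (length r)"
      "prefix_height (u @ True # r) k1 = c + 1" "prefix_height (u @ True # r) k2 = c + 1"
      unfolding visits_twice_def by auto
    then have "length u < k1"
      using low[of k1] by (meson not_le)
    then show "visits_twice r c"
      using k by (intro visits_twiceI[of "k1 - length u - 1" "k2 - length u - 1"]) (auto simp: ph)
  next
    assume "visits_twice r c"
    then obtain l1 l2 where "l1 < l2" "l2 \<le> length r" "prefix_height r l1 = c" "prefix_height r l2 = c"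
      unfolding visits_twice_def by blast
    then show "visits_twice (u @ True # r) (c + 1)"
      by (intro visits_twiceI[of "Suc (length u + l1)" "Suc (length u + l2)"]) (auto simp: ph)
  qed
qed

lemma join_visits_twice_iff:
  "set us \<subseteq> Dyck \<Longrightarrow> i < length us \<Longrightarrow> visits_twice (join i us) (int i) \<longleftrightarrow> us ! i \<noteq> []"
proof (induction us arbitrary: i rule: induct_list012)
  case (3 u v us)
  show ?case
  proof (cases i)
    case 0
    have "\<forall>k. prefix_height (join 0 (v # us)) k \<le> 0"
      using join_prefix_height_le[of "v # us" 0] "3.prems" by simp
    then show ?thesis
      using "3.prems" 0 by (simp add: visits_twice_Dyck_False)
  next
    case (Suc i')
    then show ?thesis
      using "3.IH"(2)[of i'] "3.prems" visits_twice_Dyck_True[of u "int i'"] by (simp add: add.commute)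
  qed
qed (auto simp: visits_twice_Dyck)

lemma split_first_factor:
  assumes "\<forall>k. prefix_height x k \<le> int i" "\<exists>k. prefix_height x k = int i"
    and "height x = 2 * int i - int (Suc h)"
  shows "\<exists>a r. a \<in> Dyck \<and> x = a @ (0 < i) # r \<and> (\<forall>l. prefix_height r l \<le> int (i - 1)) \<and>
           (\<exists>l. prefix_height r l = int (i - 1)) \<and> height r = 2 * int (i - 1) - int h"
proof (cases "0 < i")
  case True
  then obtain a r where a: "a \<in> Dyck" and x: "x = a @ True # r"
    and r: "\<forall>l. prefix_height r l \<le> int i - 1" "\<exists>l. prefix_height r l = int i - 1"
    using Dyck_True_split_peak[of x "int i"] assms(1,2) by (metis of_nat_0_less_iff)
  moreover have "height r = 2 * int (i - 1) - int h"
    using assms(3) a True by (simp add: x Dyck_height)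
  ultimately show ?thesis
    using True by (intro exI[of _ a] exI[of _ r]) (simp add: of_nat_diff)
next
  case False
  then obtain a r where a: "a \<in> Dyck" and x: "x = a @ False # r"
    and r: "\<forall>k. prefix_height r k \<le> 0" "height r = height x + 1"
    using Dyck_False_split[of x] assms(1,3) by auto
  moreover have "\<exists>l. prefix_height r l = int (i - 1)"
    using False by (intro exI[of _ 0]) simp
  ultimately show ?thesis
    using False assms(3) by (intro exI[of _ a] exI[of _ r]) simp
qed

lemma join_exists:
  assumes "\<forall>k. prefix_height x k \<le> int i" "\<exists>k. prefix_height x k = int i"
    and "height x = 2 * int i - int h" "i \<le> h"
  shows "\<exists>us. length us = Suc h \<and> set us \<subseteq> Dyck \<and> x = join i us"
  using assms
proof (induction h arbitrary: x i)
  case 0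
  then have "x \<in> Dyck"
    by (simp add: Dyck_iff)
  then show ?case
    by (intro exI[of _ "[x]"]) simp
next
  case (Suc h)
  obtain a r where a: "a \<in> Dyck" and x: "x = a @ (0 < i) # r"
    and r: "\<forall>l. prefix_height r l \<le> int (i - 1)" "\<exists>l. prefix_height r l = int (i - 1)"
      "height r = 2 * int (i - 1) - int h"
    using split_first_factor[OF Suc.prems(1-3)] by blast
  moreover have "i - 1 \<le> h"
    using Suc.prems(4) by simp
  then obtain us where "length us = Suc h" "set us \<subseteq> Dyck" "r = join (i - 1) us"
    using Suc.IH[OF r] by blast
  ultimately show ?case
    by (intro exI[of _ "a # us"]) (cases us, auto)
qed

lemma join_inj:
  assumes "set us \<subseteq> Dyck" "set us' \<subseteq> Dyck" "length us = length us'" "join i us = join i us'"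
  shows "us = us'"
  using assms
proof (induction us arbitrary: i us' rule: induct_list012)
  case (2 u)
  then show ?case
    by (cases us') auto
next
  case (3 u v vs)
  obtain u' v' vs' where us': "us' = u' # v' # vs'"
    using "3.prems"(3) by (metis Suc_length_conv)
  have "u = u' \<and> join (i - 1) (v # vs) = join (i - 1) (v' # vs')"
  proof (rule Dyck_split_unique)
    show "\<not> 0 < i \<Longrightarrow> \<forall>k. prefix_height (join (i - 1) (v # vs)) k \<le> 0"
      using join_prefix_height_le[of "v # vs" 0] "3.prems"(1) by auto
    show "\<not> 0 < i \<Longrightarrow> \<forall>k. prefix_height (join (i - 1) (v' # vs')) k \<le> 0"
      using join_prefix_height_le[of "v' # vs'" 0] "3.prems"(2) us' by auto
  qed (use "3.prems" us' in auto)
  then show ?case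
    using "3.IH"(2)[of "v' # vs'"] "3.prems" us' by auto
qed simp

lemma C_iff:
  "x \<in> C n h i \<longleftrightarrow> length x = n \<and> i \<le> h \<and> (\<forall>k. prefix_height x k \<le> int i) \<and>
     (\<exists>k. prefix_height x k = int i) \<and> height x = 2 * int i - int h"
  by (auto simp: C_def join_prefix_height_le join_reaches join_height dest: join_exists)

lemma Cminus_iff: "x \<in> Cminus n h i \<longleftrightarrow> x \<in> C n h i \<and> \<not> visits_twice x (int i)"
  by (auto simp: Cminus_def C_def join_visits_twice_iff)

lemma Cplus_iff: "x \<in> Cplus n h i \<longleftrightarrow> x \<in> C n h i \<and> visits_twice x (int i)"
  by (auto simp: Cplus_def C_def join_visits_twice_iff)

section \<open>Perfect matchings from bijections, and lexical matchings\<close>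

lemma hyp_adj_sym:
  assumes "hyp_adj x y"
  shows "hyp_adj y x"
proof -
  have "length x = length y"
    using assms by (simp add: hyp_adj_def)
  then have "{j. j < length y \<and> y ! j \<noteq> x ! j} = {j. j < length x \<and> x ! j \<noteq> y ! j}"
    by auto
  then show ?thesis
    using assms \<open>length x = length y\<close> unfolding hyp_adj_def by simp
qed

lemma hyp_adj_list_update: "j < length x \<Longrightarrow> x ! j \<noteq> b \<Longrightarrow> hyp_adj x (x[j := b])"
proof -
  assume "j < length x" "x ! j \<noteq> b"
  then have "{k. k < length x \<and> x ! k \<noteq> x[j := b] ! k} = {j}"
    by (auto simp: nth_list_update)
  then show ?thesis
    by (simp add: hyp_adj_def)
qed

lemma hyp_adj_append_context:
  assumes "hyp_adj s t"
  shows "hyp_adj (P @ s @ Q) (P @ t @ Q)"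
proof -
  have len: "length s = length t"
    using assms by (simp add: hyp_adj_def)
  have "{k. k < length (P @ s @ Q) \<and> (P @ s @ Q) ! k \<noteq> (P @ t @ Q) ! k}
      = (\<lambda>k. length P + k) ` {k. k < length s \<and> s ! k \<noteq> t ! k}" (is "?D = _")
  proof (rule set_eqI)
    fix k
    show "k \<in> ?D \<longleftrightarrow> k \<in> (\<lambda>k. length P + k) ` {k. k < length s \<and> s ! k \<noteq> t ! k}"
      using len by (cases "k < length P") (auto simp: nth_append image_iff not_less le_iff_add)
  qed
  then have "card ?D = card {k. k < length s \<and> s ! k \<noteq> t ! k}"
    by (simp add: card_image)
  then show ?thesis
    using assms len by (simp add: hyp_adj_def)
qed

lemma edges_between_commute: "edges_between M Y X = edges_between M X Y"
  unfolding edges_between_def by (auto simp: insert_commute)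

lemma perfect_matching_between_commute:
  assumes "perfect_matching_between M X Y"
  shows "perfect_matching_between M Y X"
proof -
  have "\<exists>y\<in>Y. \<exists>x\<in>X. e = {y, x} \<and> hyp_adj y x" if "e \<in> M" for e
    using assms that unfolding perfect_matching_between_def by (metis hyp_adj_sym insert_commute)
  then show ?thesis
    using assms unfolding perfect_matching_between_def by (auto simp: Un_commute)
qed

lemma edges_between_graph:
  "f ` X \<subseteq> Y \<Longrightarrow> edges_between {{x, f x} | x. x \<in> X} X Y = {{x, f x} | x. x \<in> X}"
  unfolding edges_between_def by blast

lemma perfect_matching_between_graph:
  assumes disj: "X \<inter> Y = {}" and bij: "bij_betw f X Y" and adj: "\<And>x. x \<in> X \<Longrightarrow> hyp_adj x (f x)"
  shows "perfect_matching_between {{x, f x} | x. x \<in> X} X Y"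
  unfolding perfect_matching_between_def
proof (intro conjI ballI)
  have fY: "f x \<in> Y" if "x \<in> X" for x
    using bij that by (auto simp: bij_betw_def)
  show "\<exists>x\<in>X. \<exists>y\<in>Y. e = {x, y} \<and> hyp_adj x y" if "e \<in> {{x, f x} | x. x \<in> X}" for e
    using that fY adj by blast
  show "\<exists>!e. e \<in> {{x, f x} | x. x \<in> X} \<and> v \<in> e" if "v \<in> X \<union> Y" for v
  proof -
    obtain x where x: "x \<in> X" "v = x \<or> v = f x"
      using \<open>v \<in> X \<union> Y\<close> bij by (auto simp: bij_betw_def)
    have unique: "x' = x" if x': "x' \<in> X" "v = x' \<or> v = f x'" for x'
    proof -
      have "v \<noteq> x' \<or> v \<noteq> f x" "v \<noteq> f x' \<or> v \<noteq> x"
        using x'(1) x(1) fY disj by blast+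
      then have "x' = x \<or> f x' = f x"
        using x(2) x'(2) by auto
      then show ?thesis
        using inj_onD[OF bij_betw_imp_inj_on[OF bij] _ x'(1) x(1)] by blast
    qed
    show ?thesis
    proof (rule ex1I[of _ "{x, f x}"])
      show "{x, f x} \<in> {{x, f x} | x. x \<in> X} \<and> v \<in> {x, f x}"
        using x by blast
    next
      fix e
      assume "e \<in> {{x, f x} | x. x \<in> X} \<and> v \<in> e"
      then obtain x' where "x' \<in> X" "e = {x', f x'}" "v = x' \<or> v = f x'"
        by blast
      then show "e = {x, f x}"
        using unique by blast
    qed
  qed
qed (fact disj)

definition lex_step :: "nat \<Rightarrow> bool list \<Rightarrow> nat \<Rightarrow> bool" where
  "lex_step p x j \<longleftrightarrow> j < length x \<and> j \<in> downs (dpath x) \<and>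
     card {j' \<in> downs (dpath x). scan_before (dpath x) j' j} = p"

lemma scan_before_iff:
  "scan_before w a b \<longleftrightarrow> prefix_height w b < prefix_height w a \<or>
     (prefix_height w a = prefix_height w b \<and> b < a)"
  by (simp add: scan_before_def prefix_height_def)

lemma dpath_nth: "j < length x \<Longrightarrow> dpath x ! j = x ! j"
  by (simp add: dpath_def nth_append)

lemma length_dpath: "length (dpath x) = length x + nat (height x + 1)"
  by (simp add: dpath_def)

lemma prefix_height_dpath: "k \<le> length x \<Longrightarrow> prefix_height (dpath x) k = prefix_height x k"
  by (simp add: dpath_def prefix_height_append)

lemma prefix_height_dpath_beyond:
  assumes "length x < k" "k \<le> length (dpath x)"
  shows "prefix_height (dpath x) k < height x"
proof -
  have "-1 \<le> height x"
    using assms by (simp add: length_dpath)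
  then have "prefix_height (dpath x) k = height x - int (k - length x)"
    using assms by (simp add: dpath_def prefix_height_append prefix_height_def take_replicate height_def
        sum_list_replicate)
  then show ?thesis
    using assms(1) by simp
qed

lemma dpath_peak:
  assumes "\<forall>k. prefix_height x k \<le> c" "k \<le> length (dpath x)" "c \<le> prefix_height (dpath x) k"
  shows "k \<le> length x \<and> prefix_height x k = c"
proof (cases "k \<le> length x")
  case False
  then have "prefix_height (dpath x) k < height x"
    using assms(2) by (simp add: prefix_height_dpath_beyond)
  then show ?thesis
    using assms(1,3) prefix_height_length[of x] by (metis less_le_not_le order_trans)
next
  case True
  then show ?thesis
    using assms(1)[rule_format, of k] assms(3) by (simp add: prefix_height_dpath)
qed

lemma down_dpath: "j < length x \<Longrightarrow> \<not> x ! j \<Longrightarrow> j \<in> downs (dpath x)"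
  by (simp add: downs_def dpath_nth length_dpath)

lemma end_down_dpath: "-1 < height x \<Longrightarrow> length x \<in> downs (dpath x)"
  by (simp add: downs_def dpath_def nth_append)

lemma lex_step_down: "lex_step p x j \<Longrightarrow> \<not> x ! j"
  by (auto simp: lex_step_def downs_def dpath_nth)

lemma lex_step_unique:
  assumes "lex_step p x j1" "lex_step p x j2"
  shows "j1 = j2"
proof (rule ccontr)
  let ?S = "\<lambda>j. {j' \<in> downs (dpath x). scan_before (dpath x) j' j}"
  assume "j1 \<noteq> j2"
  then obtain a b where ab: "lex_step p x a" "lex_step p x b" "scan_before (dpath x) a b"
    using assms by (metis scan_before_iff linorder_neqE_nat linorder_neqE)
  have "?S a \<subset> ?S b"
    using ab by (auto simp: scan_before_iff lex_step_def)
  moreover have "finite (?S b)"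
    by (rule finite_subset[of _ "{..<length (dpath x)}"]) (auto simp: downs_def)
  ultimately have "card (?S a) < card (?S b)"
    by (rule psubset_card_mono[rotated])
  then show False
    using ab by (simp add: lex_step_def)
qed

lemma lex_step_0I:
  assumes "j < length x" "\<not> x ! j" "\<forall>j'\<in>downs (dpath x). \<not> scan_before (dpath x) j' j"
  shows "lex_step 0 x j"
proof -
  have "{j' \<in> downs (dpath x). scan_before (dpath x) j' j} = {}"
    using assms(3) by blast
  then show ?thesis
    using assms(1,2) down_dpath unfolding lex_step_def by (metis card.empty)
qed

lemma lex_step_1I:
  assumes "j < length x" "\<not> x ! j" "t \<in> downs (dpath x)" "scan_before (dpath x) t j"
    and "\<forall>j'\<in>downs (dpath x). scan_before (dpath x) j' j \<longrightarrow> j' = t"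
  shows "lex_step 1 x j"
proof -
  have "{j' \<in> downs (dpath x). scan_before (dpath x) j' j} = {t}"
    using assms(3-5) by blast
  then show ?thesis
    using assms(1,2) by (simp add: lex_step_def down_dpath)
qed

lemma edges_between_Mlex:
  assumes L: "\<And>x. x \<in> L \<Longrightarrow> length x = n \<and> height x = c" and U: "\<And>y. y \<in> U \<Longrightarrow> height y = c + 2"
    and step: "\<And>x. x \<in> L \<Longrightarrow> lex_step p x (s x) \<and> x[s x := True] \<in> U"
  shows "edges_between (Mlex n p) L U = {{x, x[s x := True]} | x. x \<in> L}"
proof (intro equalityI subsetI)
  fix e
  assume "e \<in> edges_between (Mlex n p) L U"
  then obtain a j x y where e: "e = {a, a[j := True]}" "lex_step p a j" "e = {x, y}" "x \<in> L" "y \<in> U"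
    unfolding edges_between_def Mlex_def lex_step_def by blast
  have up: "height (a[j := True]) = height a + 2"
    using e(2) lex_step_down[OF e(2)] by (simp add: lex_step_def height_flip_up)
  from e(1,3) consider "x = a" | "x = a[j := True]" "y = a"
    by (auto simp: doubleton_eq_iff)
  then have "a = x"
  proof cases
    case 2
    then have "height x = height y + 2"
      using up by simp
    then show ?thesis
      using L[OF e(4)] U[OF e(5)] by simp
  qed simp
  moreover have "j = s x"
    using lex_step_unique[OF e(2)] step[OF e(4)] \<open>a = x\<close> by simp
  ultimately show "e \<in> {{x, x[s x := True]} | x. x \<in> L}"
    using e(1,4) by blast
next
  fix e
  assume "e \<in> {{x, x[s x := True]} | x. x \<in> L}"
  then obtain x where "x \<in> L" "e = {x, x[s x := True]}"
    by blast
  then show "e \<in> edges_between (Mlex n p) L U"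
    using L step unfolding edges_between_def Mlex_def lex_step_def by blast
qed

lemma perfect_matching_Mlex:
  fixes P :: "bool list \<Rightarrow> nat \<Rightarrow> bool"
  assumes L: "\<And>x. x \<in> L \<Longrightarrow> length x = n \<and> height x = c" and U: "\<And>y. y \<in> U \<Longrightarrow> height y = c + 2"
    and ex: "\<And>x. x \<in> L \<Longrightarrow> \<exists>j. P x j"
    and step: "\<And>x j. x \<in> L \<Longrightarrow> P x j \<Longrightarrow> lex_step p x j \<and> x[j := True] \<in> U"
    and onto: "\<And>y. y \<in> U \<Longrightarrow> \<exists>x\<in>L. \<exists>j. P x j \<and> x[j := True] = y"
    and inj: "\<And>x1 x2 j1 j2. x1 \<in> L \<Longrightarrow> x2 \<in> L \<Longrightarrow> P x1 j1 \<Longrightarrow> P x2 j2 \<Longrightarrow>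
      x1[j1 := True] = x2[j2 := True] \<Longrightarrow> x1 = x2"
  shows "perfect_matching_between (edges_between (Mlex n p) L U) L U"
proof -
  define s where "s x = (SOME j. P x j)" for x
  have P: "P x (s x)" if "x \<in> L" for x
    unfolding s_def using ex[OF that] by (rule someI_ex)
  have s: "s x = j" if "x \<in> L" "P x j" for x j
    using lex_step_unique step[OF that] step[OF that(1) P[OF that(1)]] by blast
  have "bij_betw (\<lambda>x. x[s x := True]) L U"
  proof (rule bij_betw_imageI)
    show "inj_on (\<lambda>x. x[s x := True]) L"
      by (rule inj_onI) (use inj P in blast)
    show "(\<lambda>x. x[s x := True]) ` L = U"
      using step P onto s by fastforce
  qed
  moreover have "L \<inter> U = {}"
  proof -
    have "x \<notin> U" if "x \<in> L" for x
      using L[OF that] U[of x] by auto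
    then show ?thesis
      by blast
  qed
  moreover have "hyp_adj x (x[s x := True])" if "x \<in> L" for x
    using step[OF that P[OF that]] lex_step_down by (auto simp: lex_step_def intro: hyp_adj_list_update)
  moreover have "edges_between (Mlex n p) L U = {{x, x[s x := True]} | x. x \<in> L}"
    by (rule edges_between_Mlex) (use L U step P in auto)
  ultimately show ?thesis
    by (simp add: perfect_matching_between_graph)
qed

definition last_visit :: "bool list \<Rightarrow> int \<Rightarrow> nat \<Rightarrow> bool" where
  "last_visit x c j \<longleftrightarrow> j < length x \<and> prefix_height x j = c \<and> (\<forall>k>j. prefix_height x k < c)"

definition second_last_visit :: "bool list \<Rightarrow> int \<Rightarrow> nat \<Rightarrow> bool" where
  "second_last_visit x c j \<longleftrightarrow> j < length x \<and> prefix_height x j = c \<and>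
     (\<exists>t>j. t \<le> length x \<and> prefix_height x t = c \<and>
        (\<forall>k. j < k \<and> k \<le> length x \<and> k \<noteq> t \<longrightarrow> prefix_height x k < c))"

lemma last_visit_down: "last_visit x c j \<Longrightarrow> \<not> x ! j"
  by (simp add: last_visit_def down_step_iff)

lemma second_last_visit_down: "second_last_visit x c j \<Longrightarrow> \<not> x ! j"
  unfolding second_last_visit_def
  by (metis Suc_leI lessI down_step_iff prefix_height_Suc add_cancel_left_right one_neq_zero
      zero_neq_neg_one)

lemma second_last_visit_at_end:
  assumes "second_last_visit x c j" "height x = c"
  shows "\<forall>k. j < k \<and> k < length x \<longrightarrow> prefix_height x k < c"
proof -
  obtain t where t: "j < t" "t \<le> length x" "prefix_height x t = c"
    and others: "\<forall>k. j < k \<and> k \<le> length x \<and> k \<noteq> t \<longrightarrow> prefix_height x k < c"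
    using assms(1) by (auto simp: second_last_visit_def)
  have "t = length x"
    using others[rule_format, of "length x"] t assms(2) by force
  then show ?thesis
    using others by auto
qed

lemma last_visit_exists:
  assumes "c \<le> prefix_height x k" "height x < c"
  shows "\<exists>j\<ge>k. last_visit x c j"
proof -
  have "k \<le> length x"
    using assms prefix_height_beyond[of x k] by (cases "k \<le> length x") auto
  then obtain j where j: "k \<le> j" "j < length x" "prefix_height x j = c"
    and after: "\<forall>k'. j < k' \<and> k' \<le> length x \<longrightarrow> prefix_height x k' < c"
    using last_down_crossing[of c x k "length x"] assms by auto
  have "prefix_height x k' < c" if "j < k'" for k'
    using after that assms(2) prefix_height_beyond[of x k'] by (cases "k' \<le> length x") auto
  then show ?thesis
    using j unfolding last_visit_def by blast
qed

lemma flip_up_inj: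
  assumes "j1 < length x1" "\<not> x1 ! j1" "prefix_height x1 j1 = c" "\<forall>k>0. prefix_height x1 k \<le> c"
    and "j2 < length x2" "\<not> x2 ! j2" "prefix_height x2 j2 = c" "\<forall>k>0. prefix_height x2 k \<le> c"
    and "x1[j1 := True] = x2[j2 := True]"
  shows "x1 = x2"
proof -
  \<comment> \<open>j + 1 is the first positive position at which the flipped path exceeds c.\<close>
  have False if "j1 < length x1" "\<not> x1 ! j1" "prefix_height x1 j1 = c"
    and "j2 < length x2" "\<not> x2 ! j2" "\<forall>k>0. prefix_height x2 k \<le> c"
    and "x1[j1 := True] = x2[j2 := True]" "j1 < j2" for x1 x2 j1 j2
  proof -
    have "prefix_height (x1[j1 := True]) (Suc j1) = c + 1"
      using that(1-3) by (simp add: prefix_height_flip_up prefix_height_Suc)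
    moreover have "prefix_height (x2[j2 := True]) (Suc j1) \<le> c"
      using that(4-6,8) by (simp add: prefix_height_flip_up)
    ultimately show False
      using that(7) by simp
  qed
  then have "j1 = j2"
    using assms by (metis linorder_neqE_nat)
  then show ?thesis
    using assms(2,6,9) by (metis list_update_id list_update_overwrite)
qed

section \<open>The matching M^0\<close>

lemma C_last_visit_exists:
  assumes "x \<in> C n h i" "i < h"
  shows "\<exists>j. last_visit x (int i) j"
proof -
  obtain k where "prefix_height x k = int i"
    using assms(1) by (auto simp: C_iff)
  moreover have "height x < int i"
    using assms by (simp add: C_iff)
  ultimately show ?thesis
    using last_visit_exists[of "int i" x k] by auto
qed

lemma C_last_visit_lex_step:
  assumes "x \<in> C n h i" "last_visit x (int i) j"
  shows "lex_step 0 x j"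
proof (rule lex_step_0I)
  show "j < length x" "\<not> x ! j"
    using assms(2) last_visit_down by (auto simp: last_visit_def)
  have hj: "prefix_height (dpath x) j = int i"
    using assms(2) by (simp add: last_visit_def prefix_height_dpath)
  show "\<forall>j'\<in>downs (dpath x). \<not> scan_before (dpath x) j' j"
  proof (intro ballI notI)
    fix j'
    assume "j' \<in> downs (dpath x)" "scan_before (dpath x) j' j"
    then have "j' \<le> length x \<and> prefix_height x j' = int i" "j < j'"
      using dpath_peak[of x "int i" j'] assms(1) hj
      by (auto simp: C_iff downs_def scan_before_iff prefix_height_dpath)
    then show False
      using assms(2) by (auto simp: last_visit_def)
  qed
qed

lemma C_last_visit_flip:
  assumes "x \<in> C n h i" "i < h" "last_visit x (int i) j"
  shows "x[j := True] \<in> C n h (i + 1)"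
proof -
  have j: "j < length x" "\<not> x ! j" "prefix_height x j = int i" "\<forall>k>j. prefix_height x k < int i"
    using assms(3) last_visit_down by (auto simp: last_visit_def)
  have "prefix_height (x[j := True]) k \<le> 1 + int i" for k
    using assms(1) j by (auto simp: C_iff prefix_height_flip_up) (smt (verit))
  moreover have "prefix_height (x[j := True]) (Suc j) = 1 + int i"
    using j by (simp add: prefix_height_flip_up prefix_height_Suc)
  ultimately show ?thesis
    using assms(1,2) j by (auto simp: C_iff height_flip_up)
qed

lemma C_flip_onto:
  assumes "y \<in> C n h (i + 1)"
  shows "\<exists>x\<in>C n h i. \<exists>j. last_visit x (int i) j \<and> x[j := True] = y"
proof -
  have le: "\<forall>k. prefix_height y k \<le> 1 + int i"
    using assms by (simp add: C_iff)
  obtain k where "prefix_height y k = 1 + int i"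
    using assms by (auto simp: C_iff)
  then obtain j where j: "j < length y" "y ! j" "prefix_height y j = int i"
    and before: "\<forall>k'\<le>j. prefix_height y k' < 1 + int i"
    using first_up_crossing[of y 0 "1 + int i" k] by auto
  define x where "x = y[j := False]"
  have ph: "prefix_height x k = prefix_height y k - (if j < k then 2 else 0)" for k
    using j by (simp add: x_def prefix_height_flip_down)
  have lx: "length x = length y"
    by (simp add: x_def)
  have "prefix_height x k < int i" if "j < k" for k
    using le[rule_format, of k] that by (simp add: ph)
  then have "last_visit x (int i) j"
    using j by (simp add: last_visit_def ph lx)
  moreover have "x \<in> C n h i"
  proof -
    have "prefix_height x k \<le> int i" for k
      using le before by (simp add: ph) (smt (verit) not_le)
    moreover have "height x = height y - 2"
      using j by (simp add: x_def height_list_update)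
    ultimately show ?thesis
      using assms j(3) ph[of j] by (auto simp: C_iff x_def)
  qed
  moreover have "x[j := True] = y"
    using j(2) list_update_id[of y j] by (simp add: x_def)
  ultimately show ?thesis
    by blast
qed

lemma perfect_matching_C:
  assumes "i < h"
  shows "perfect_matching_between (edges_between (Mlex n 0) (C n h i) (C n h (i + 1)))
    (C n h i) (C n h (i + 1))"
proof (rule perfect_matching_Mlex[where P = "\<lambda>x. last_visit x (int i)" and c = "2 * int i - int h"])
  show "length x = n \<and> height x = 2 * int i - int h" if "x \<in> C n h i" for x
    using that by (simp add: C_iff)
  show "height y = 2 * int i - int h + 2" if "y \<in> C n h (i + 1)" for y
    using that by (simp add: C_iff)
  show "\<exists>j. last_visit x (int i) j" if "x \<in> C n h i" for x
    using C_last_visit_exists[OF that assms] .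
  show "lex_step 0 x j \<and> x[j := True] \<in> C n h (i + 1)" if "x \<in> C n h i" "last_visit x (int i) j" for x j
    using C_last_visit_lex_step[OF that] C_last_visit_flip[OF that(1) assms that(2)] ..
  show "\<exists>x\<in>C n h i. \<exists>j. last_visit x (int i) j \<and> x[j := True] = y" if "y \<in> C n h (i + 1)" for y
    using C_flip_onto[OF that] .
  fix x1 x2 j1 j2
  assume "x1 \<in> C n h i" "x2 \<in> C n h i" "last_visit x1 (int i) j1" "last_visit x2 (int i) j2"
    "x1[j1 := True] = x2[j2 := True]"
  then show "x1 = x2"
    using last_visit_down by (intro flip_up_inj[of j1 x1 "int i" j2 x2]) (auto simp: C_iff last_visit_def)
qed

section \<open>The matching M^1\<close>

lemma Cplus_second_last_visit_exists:
  assumes "x \<in> Cplus n h i"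
  shows "\<exists>j. second_last_visit x (int i) j"
proof -
  have le: "\<forall>k. prefix_height x k \<le> int i"
    using assms by (simp add: Cplus_iff C_iff)
  obtain k1 k2 where k: "k1 < k2" "k2 \<le> length x" "prefix_height x k1 = int i" "prefix_height x k2 = int i"
    using assms by (auto simp: Cplus_iff visits_twice_def)
  obtain t where t: "k2 \<le> t" "t \<le> length x" "prefix_height x t = int i"
    and after_t: "\<forall>k'. t < k' \<and> k' \<le> length x \<longrightarrow> prefix_height x k' \<noteq> int i"
    using last_in_range[of "\<lambda>k. prefix_height x k = int i" k2 "length x"] k by auto
  obtain t' where t': "t = Suc t'"
    using k t by (cases t) auto
  have "prefix_height x t' < int i"
    using prefix_height_Suc[of t' x] le[rule_format, of t'] t t' by (auto split: if_splits)
  then obtain j where j: "k1 \<le> j" "j < t'" "j < length x" "prefix_height x j = int i"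
    and before_t: "\<forall>k'. j < k' \<and> k' \<le> t' \<longrightarrow> prefix_height x k' < int i"
    using last_down_crossing[of "int i" x k1 t'] k t t' by auto
  have "prefix_height x k < int i" if "j < k" "k \<le> length x" "k \<noteq> t" for k
    using before_t after_t le[rule_format, of k] that t' by (cases "k \<le> t'") auto
  then have "second_last_visit x (int i) j"
    unfolding second_last_visit_def using j t t' by (intro conjI exI[of _ t]) auto
  then show ?thesis ..
qed

lemma Cplus_second_last_visit_lex_step:
  assumes "x \<in> Cplus n h i" "second_last_visit x (int i) j"
  shows "lex_step 1 x j"
proof -
  have le: "\<forall>k. prefix_height x k \<le> int i"
    using assms by (simp add: Cplus_iff C_iff)
  obtain t where t: "j < t" "t \<le> length x" "prefix_height x t = int i"
    and others: "\<forall>k. j < k \<and> k \<le> length x \<and> k \<noteq> t \<longrightarrow> prefix_height x k < int i"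
    using assms(2) by (auto simp: second_last_visit_def)
  have j: "j < length x" "\<not> x ! j" "prefix_height (dpath x) j = int i"
    using assms(2) second_last_visit_down by (auto simp: second_last_visit_def prefix_height_dpath)
  have "t \<in> downs (dpath x)"
  proof (cases "t < length x")
    case True
    then have "prefix_height x (Suc t) < prefix_height x t"
      using others[rule_format, of "Suc t"] t by simp
    then show ?thesis
      using True by (simp add: down_step_iff down_dpath)
  next
    case False
    then show ?thesis
      using t by (simp add: end_down_dpath)
  qed
  moreover have "scan_before (dpath x) t j"
    using t j by (simp add: scan_before_iff prefix_height_dpath)
  moreover have "\<forall>j'\<in>downs (dpath x). scan_before (dpath x) j' j \<longrightarrow> j' = t"
  proof (intro ballI impI)
    fix j'
    assume j': "j' \<in> downs (dpath x)" "scan_before (dpath x) j' j"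
    have "j' \<le> length x \<and> prefix_height x j' = int i"
      using j' dpath_peak[OF le, of j'] j by (auto simp: downs_def scan_before_iff)
    moreover from this have "j < j'"
      using j'(2) j by (simp add: scan_before_iff prefix_height_dpath)
    ultimately show "j' = t"
      using others by force
  qed
  ultimately show ?thesis
    by (rule lex_step_1I[OF j(1,2)])
qed

lemma Cplus_second_last_visit_flip:
  assumes "x \<in> Cplus n h i" "second_last_visit x (int i) j"
  shows "x[j := True] \<in> Cminus n (h + 2) (i + 2)"
proof -
  have x: "length x = n" "i \<le> h" "\<forall>k. prefix_height x k \<le> int i" "height x = 2 * int i - int h"
    using assms(1) by (simp_all add: Cplus_iff C_iff)
  obtain t where t: "j < t" "t \<le> length x" "prefix_height x t = int i"
    and others: "\<forall>k. j < k \<and> k \<le> length x \<and> k \<noteq> t \<longrightarrow> prefix_height x k < int i"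
    using assms(2) by (auto simp: second_last_visit_def)
  have j: "j < length x" "\<not> x ! j"
    using assms(2) second_last_visit_down by (auto simp: second_last_visit_def)
  have ph: "prefix_height (x[j := True]) k = prefix_height x k + (if j < k then 2 else 0)" for k
    using j by (simp add: prefix_height_flip_up)
  have top: "k = t" if "k \<le> length x" "prefix_height (x[j := True]) k = 2 + int i" for k
    using that others x(3)[rule_format, of k] by (auto simp: ph split: if_splits)
  have "\<not> visits_twice (x[j := True]) (int (i + 2))"
  proof
    assume "visits_twice (x[j := True]) (int (i + 2))"
    then obtain k1 k2 where "k1 < k2" "k2 \<le> length x"
      "prefix_height (x[j := True]) k1 = 2 + int i" "prefix_height (x[j := True]) k2 = 2 + int i"
      by (auto simp: visits_twice_def)
    then show False
      using top[of k1] top[of k2] by simp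
  qed
  moreover have "prefix_height (x[j := True]) k \<le> 2 + int i" for k
    using x(3)[rule_format, of k] by (simp add: ph)
  moreover have "prefix_height (x[j := True]) t = 2 + int i"
    using t by (simp add: ph)
  ultimately show ?thesis
    using x j by (auto simp: Cminus_iff C_iff height_flip_up)
qed

lemma Cminus_flip_onto_Cplus:
  assumes "y \<in> Cminus n (h + 2) (i + 2)"
  shows "\<exists>x\<in>Cplus n h i. \<exists>j. second_last_visit x (int i) j \<and> x[j := True] = y"
proof -
  have y: "length y = n" "i \<le> h" "\<forall>k. prefix_height y k \<le> 2 + int i"
    "height y = 2 + (2 * int i - int h)" "\<not> visits_twice y (2 + int i)"
    and "\<exists>k. prefix_height y k = 2 + int i"
    using assms by (auto simp: Cminus_iff C_iff)
  then obtain t where t: "t \<le> length y" "prefix_height y t = 2 + int i"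
    using visit_within_length by blast
  then obtain j where j: "j < t" "j < length y" "y ! j" "prefix_height y j = int i"
    and before: "\<forall>k'\<le>j. prefix_height y k' < 1 + int i"
    using first_up_crossing[of y 0 "1 + int i" t] by auto
  define x where "x = y[j := False]"
  have ph: "prefix_height x k = prefix_height y k - (if j < k then 2 else 0)" for k
    using j by (simp add: x_def prefix_height_flip_down)
  have lx: "length x = length y"
    by (simp add: x_def)
  have "prefix_height x k < int i" if "j < k" "k \<le> length x" "k \<noteq> t" for k
    using visits_onceD[OF y(5) _ t(1) _ t(2), of k] y(3)[rule_format, of k] that by (force simp: ph lx)
  then have "second_last_visit x (int i) j"
    unfolding second_last_visit_def using j t by (intro conjI exI[of _ t]) (auto simp: ph lx)
  moreover have "x \<in> Cplus n h i"
  proof -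
    have "prefix_height x k \<le> int i" for k
      using y(3)[rule_format, of k] before by (simp add: ph) (smt (verit) not_le)
    moreover have "visits_twice x (int i)"
      using j t by (intro visits_twiceI[of j t]) (auto simp: ph lx)
    ultimately show ?thesis
      using y j ph[of j] by (auto simp: Cplus_iff C_iff x_def height_list_update)
  qed
  moreover have "x[j := True] = y"
    using j(3) list_update_id[of y j] by (simp add: x_def)
  ultimately show ?thesis
    by blast
qed

lemma perfect_matching_Cplus_Cminus:
  assumes "i \<le> h"
  shows "perfect_matching_between (edges_between (Mlex n 1) (Cplus n h i) (Cminus n (h + 2) (i + 2)))
    (Cplus n h i) (Cminus n (h + 2) (i + 2))"
proof (rule perfect_matching_Mlex[where P = "\<lambda>x. second_last_visit x (int i)" and c = "2 * int i - int h"])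
  show "length x = n \<and> height x = 2 * int i - int h" if "x \<in> Cplus n h i" for x
    using that by (simp add: Cplus_iff C_iff)
  show "height y = 2 * int i - int h + 2" if "y \<in> Cminus n (h + 2) (i + 2)" for y
    using that by (simp add: Cminus_iff C_iff)
  show "\<exists>j. second_last_visit x (int i) j" if "x \<in> Cplus n h i" for x
    using Cplus_second_last_visit_exists[OF that] .
  show "lex_step 1 x j \<and> x[j := True] \<in> Cminus n (h + 2) (i + 2)"
    if "x \<in> Cplus n h i" "second_last_visit x (int i) j" for x j
    using Cplus_second_last_visit_lex_step[OF that] Cplus_second_last_visit_flip[OF that] ..
  show "\<exists>x\<in>Cplus n h i. \<exists>j. second_last_visit x (int i) j \<and> x[j := True] = y"
    if "y \<in> Cminus n (h + 2) (i + 2)" for y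
    using Cminus_flip_onto_Cplus[OF that] .
  fix x1 x2 j1 j2
  assume "x1 \<in> Cplus n h i" "x2 \<in> Cplus n h i" "second_last_visit x1 (int i) j1"
    "second_last_visit x2 (int i) j2" "x1[j1 := True] = x2[j2 := True]"
  then show "x1 = x2"
    using second_last_visit_down
    by (intro flip_up_inj[of j1 x1 "int i" j2 x2]) (auto simp: Cplus_iff C_iff second_last_visit_def)
qed

lemma C_peak_before_last_visit:
  assumes "x \<in> C n h i" "last_visit x (int i - 1) j"
  shows "\<exists>t<j. prefix_height x t = int i \<and> \<not> x ! t"
proof -
  have le: "\<forall>k. prefix_height x k \<le> int i"
    using assms(1) by (simp add: C_iff)
  obtain t where t: "prefix_height x t = int i"
    using assms(1) by (auto simp: C_iff)
  have j: "j < length x" "prefix_height x j = int i - 1" "\<forall>k>j. prefix_height x k < int i - 1"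
    using assms(2) by (simp_all add: last_visit_def)
  have "t < j"
  proof (rule ccontr)
    assume "\<not> t < j"
    then have "t = j \<or> j < t"
      by auto
    then show False
      using t j by auto
  qed
  moreover have "\<not> x ! t"
    using prefix_height_Suc[of t x] le[rule_format, of "Suc t"] t \<open>t < j\<close> j(1) by auto
  ultimately show ?thesis
    using t by blast
qed

lemma C_last_visit_below_peak_exists:
  assumes "x \<in> C n (h + 2) i" "i \<le> h"
  shows "\<exists>j. last_visit x (int i - 1) j"
proof -
  obtain t where "prefix_height x t = int i"
    using assms by (auto simp: C_iff)
  moreover have "height x < int i - 1"
    using assms by (simp add: C_iff)
  ultimately show ?thesis
    using last_visit_exists[of "int i - 1" x t] by auto
qed

lemma Cminus_last_visit_lex_step:
  assumes "x \<in> Cminus n (h + 2) i" "last_visit x (int i - 1) j"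
  shows "lex_step 1 x j"
proof -
  have x: "\<forall>k. prefix_height x k \<le> int i" "height x = 2 * int i - int (h + 2)" "\<not> visits_twice x (int i)"
    using assms(1) by (simp_all add: Cminus_iff C_iff)
  obtain t where t: "t < j" "prefix_height x t = int i" "\<not> x ! t"
    using C_peak_before_last_visit assms Cminus_iff by blast
  have j: "j < length x" "\<not> x ! j" "prefix_height (dpath x) j = int i - 1"
    "\<forall>k>j. prefix_height x k < int i - 1"
    using assms(2) last_visit_down by (auto simp: last_visit_def prefix_height_dpath)
  have "height x < int i - 1"
    using j(1) j(4)[rule_format, of "Suc (length x)"] prefix_height_beyond[of x "Suc (length x)"] by simp
  have "\<forall>j'\<in>downs (dpath x). scan_before (dpath x) j' j \<longrightarrow> j' = t"
  proof (intro ballI impI)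
    fix j'
    assume j': "j' \<in> downs (dpath x)" "scan_before (dpath x) j' j"
    have "j' \<le> length x"
      using j' j(3) \<open>height x < int i - 1\<close> prefix_height_dpath_beyond[of x j']
      by (force simp: downs_def scan_before_iff)
    then have "prefix_height x j' = int i \<or> (prefix_height x j' = int i - 1 \<and> j < j')"
      using j' j(3) x(1)[rule_format, of j'] by (auto simp: scan_before_iff prefix_height_dpath)
    then show "j' = t"
      using visits_onceD[OF x(3) \<open>j' \<le> length x\<close>, of t] t j(1,4) by force
  qed
  moreover have "scan_before (dpath x) t j"
    using t j by (simp add: scan_before_iff prefix_height_dpath)
  ultimately show ?thesis
    using t j by (intro lex_step_1I[OF j(1,2) down_dpath]) simp_all
qed

lemma Cminus_last_visit_flip:
  assumes "x \<in> Cminus n (h + 2) i" "i \<le> h" "last_visit x (int i - 1) j"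
  shows "x[j := True] \<in> Cplus n h i"
proof -
  have x: "length x = n" "\<forall>k. prefix_height x k \<le> int i" "height x = 2 * int i - int (h + 2)"
    using assms(1) by (simp_all add: Cminus_iff C_iff)
  obtain t where t: "t < j" "prefix_height x t = int i"
    using C_peak_before_last_visit assms(1,3) Cminus_iff by blast
  have j: "j < length x" "\<not> x ! j" "prefix_height x j = int i - 1" "\<forall>k>j. prefix_height x k < int i - 1"
    using assms(3) last_visit_down by (auto simp: last_visit_def)
  have ph: "prefix_height (x[j := True]) k = prefix_height x k + (if j < k then 2 else 0)" for k
    using j by (simp add: prefix_height_flip_up)
  have "prefix_height (x[j := True]) k \<le> int i" for k
    using x(2)[rule_format, of k] j(4)[rule_format, of k] by (auto simp: ph)
  moreover have "visits_twice (x[j := True]) (int i)"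
    using t j by (intro visits_twiceI[of t "Suc j"]) (auto simp: ph prefix_height_Suc)
  moreover have "prefix_height (x[j := True]) t = int i"
    using t by (simp add: ph)
  ultimately show ?thesis
    using x j assms(2) by (auto simp: Cplus_iff C_iff height_flip_up)
qed

lemma first_return_to_max:
  assumes "\<forall>k. prefix_height y k \<le> c" "visits_twice y c"
  shows "\<exists>t j. t < j \<and> j < length y \<and> y ! j \<and> prefix_height y j = c - 1 \<and>
           prefix_height y t = c \<and> (\<forall>k<t. prefix_height y k \<noteq> c) \<and>
           (\<forall>k. t < k \<and> k \<le> j \<longrightarrow> prefix_height y k < c)"
proof -
  obtain k1 k2 where k: "k1 < k2" "k2 \<le> length y" "prefix_height y k1 = c" "prefix_height y k2 = c"
    using assms(2) by (auto simp: visits_twice_def)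
  obtain t where t: "prefix_height y t = c" and first: "\<forall>k<t. prefix_height y k \<noteq> c"
    using exists_least_iff[of "\<lambda>k. prefix_height y k = c"] k(3) by blast
  have "t \<le> k1"
    using first k(3) not_less by blast
  then have "prefix_height y (Suc t) < c"
    using prefix_height_Suc[of t y] assms(1)[rule_format, of "Suc t"] t k by (auto split: if_splits)
  then obtain j where "Suc t \<le> j" "j < length y" "y ! j" "prefix_height y j = c - 1"
    "\<forall>k'. Suc t \<le> k' \<and> k' \<le> j \<longrightarrow> prefix_height y k' < c"
    using first_up_crossing[of y "Suc t" c k2] k \<open>t \<le> k1\<close> by auto
  then show ?thesis
    using t first by (intro exI[of _ t] exI[of _ j]) auto
qed

lemma Cplus_flip_onto_Cminus:
  assumes "y \<in> Cplus n h i"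
  shows "\<exists>x\<in>Cminus n (h + 2) i. \<exists>j. last_visit x (int i - 1) j \<and> x[j := True] = y"
proof -
  have y: "length y = n" "i \<le> h" "\<forall>k. prefix_height y k \<le> int i" "height y = 2 * int i - int h"
    using assms by (simp_all add: Cplus_iff C_iff)
  obtain t j where j: "t < j" "j < length y" "y ! j" "prefix_height y j = int i - 1"
    and t: "prefix_height y t = int i" and first: "\<forall>k<t. prefix_height y k \<noteq> int i"
    and below: "\<forall>k'. t < k' \<and> k' \<le> j \<longrightarrow> prefix_height y k' < int i"
    using first_return_to_max[OF y(3)] assms by (auto simp: Cplus_iff)
  define x where "x = y[j := False]"
  have ph: "prefix_height x k = prefix_height y k - (if j < k then 2 else 0)" for k
    using j by (simp add: x_def prefix_height_flip_down)
  have lx: "length x = length y"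
    by (simp add: x_def)
  have "prefix_height x k < int i - 1" if "j < k" for k
    using y(3)[rule_format, of k] that by (simp add: ph)
  then have "last_visit x (int i - 1) j"
    using j by (simp add: last_visit_def ph lx)
  moreover have "x \<in> Cminus n (h + 2) i"
  proof -
    have visit: "k = t" if "prefix_height x k = int i" for k
    proof -
      have "k \<le> j" "prefix_height y k = int i"
        using that y(3)[rule_format, of k] by (auto simp: ph split: if_splits)
      then have "\<not> k < t" "\<not> t < k"
        using first below by auto
      then show ?thesis
        by simp
    qed
    have "\<not> visits_twice x (int i)"
      using visit by (auto simp: visits_twice_def)
    moreover have "prefix_height x k \<le> int i" for k
      using y(3)[rule_format, of k] by (simp add: ph)
    moreover have "prefix_height x t = int i"
      using t j(1) by (simp add: ph)
    moreover have "height x = height y - 2"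
      using j by (simp add: x_def height_list_update)
    ultimately show ?thesis
      using y lx by (auto simp: Cminus_iff C_iff)
  qed
  moreover have "x[j := True] = y"
    using j(3) list_update_id[of y j] by (simp add: x_def)
  ultimately show ?thesis
    by blast
qed

lemma Cminus_last_visit_flip_inj:
  assumes "x1 \<in> Cminus n (h + 2) i" "x2 \<in> Cminus n (h + 2) i"
    and "last_visit x1 (int i - 1) j1" "last_visit x2 (int i - 1) j2" "x1[j1 := True] = x2[j2 := True]"
  shows "x1 = x2"
proof -
  have False if x1: "x1 \<in> Cminus n (h + 2) i" and x2: "x2 \<in> Cminus n (h + 2) i"
    and lv1: "last_visit x1 (int i - 1) j1" and lv2: "last_visit x2 (int i - 1) j2"
    and eq: "x1[j1 := True] = x2[j2 := True]" and lt: "j1 < j2" for x1 x2 j1 j2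
  proof -
    obtain t where t: "t < j1" "prefix_height x1 t = int i"
      using C_peak_before_last_visit x1 lv1 Cminus_iff by blast
    have j1: "j1 < length x1" "\<not> x1 ! j1" "prefix_height x1 j1 = int i - 1"
      using lv1 last_visit_down by (auto simp: last_visit_def)
    have j2: "j2 < length x2" "\<not> x2 ! j2"
      using lv2 last_visit_down by (auto simp: last_visit_def)
    have "prefix_height x2 k = prefix_height (x1[j1 := True]) k" if "k \<le> j2" for k
      using that j2 eq by (simp add: prefix_height_flip_up)
    then have "prefix_height x2 t = int i" "prefix_height x2 (Suc j1) = int i"
      using t j1 lt by (simp_all add: prefix_height_flip_up prefix_height_Suc)
    then have "visits_twice x2 (int i)"
      using t j2 lt by (intro visits_twiceI[of t "Suc j1"]) auto
    then show False
      using x2 by (simp add: Cminus_iff)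
  qed
  then have "j1 = j2"
    using assms by (metis linorder_neqE_nat)
  then show ?thesis
    using assms(3-5) last_visit_down by (metis list_update_id list_update_overwrite)
qed

lemma perfect_matching_Cminus_Cplus:
  assumes "i \<le> h"
  shows "perfect_matching_between (edges_between (Mlex n 1) (Cminus n (h + 2) i) (Cplus n h i))
    (Cminus n (h + 2) i) (Cplus n h i)"
proof (rule perfect_matching_Mlex[where P = "\<lambda>x. last_visit x (int i - 1)" and c = "2 * int i - int (h + 2)"])
  show "length x = n \<and> height x = 2 * int i - int (h + 2)" if "x \<in> Cminus n (h + 2) i" for x
    using that by (simp add: Cminus_iff C_iff)
  show "height y = 2 * int i - int (h + 2) + 2" if "y \<in> Cplus n h i" for y
    using that by (simp add: Cplus_iff C_iff)
  show "\<exists>j. last_visit x (int i - 1) j" if "x \<in> Cminus n (h + 2) i" for x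
    using that by (intro C_last_visit_below_peak_exists[OF _ assms, of _ n]) (simp add: Cminus_iff)
  show "lex_step 1 x j \<and> x[j := True] \<in> Cplus n h i"
    if "x \<in> Cminus n (h + 2) i" "last_visit x (int i - 1) j" for x j
    using Cminus_last_visit_lex_step[OF that] Cminus_last_visit_flip[OF that(1) assms that(2)] ..
  show "\<exists>x\<in>Cminus n (h + 2) i. \<exists>j. last_visit x (int i - 1) j \<and> x[j := True] = y"
    if "y \<in> Cplus n h i" for y
    using Cplus_flip_onto_Cminus[OF that] .
qed (fact Cminus_last_visit_flip_inj)

lemma Cminus_1_0_iff:
  "x \<in> Cminus n 1 0 \<longleftrightarrow> length x = n \<and> height x = -1 \<and> (\<forall>k>0. prefix_height x k < 0)"
proof
  assume x: "x \<in> Cminus n 1 0"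
  then have le: "\<forall>k. prefix_height x k \<le> 0" and once: "\<not> visits_twice x 0" and "height x = -1"
    by (simp_all add: Cminus_iff C_iff)
  moreover have "prefix_height x k < 0" if "0 < k" for k
  proof -
    have "prefix_height x k \<noteq> 0"
      using visits_onceD[OF once, of 0 k] that \<open>height x = -1\<close> prefix_height_beyond[of x k]
      by (cases "k \<le> length x") auto
    then show ?thesis
      using le[rule_format, of k] by simp
  qed
  ultimately show "length x = n \<and> height x = -1 \<and> (\<forall>k>0. prefix_height x k < 0)"
    using x by (simp add: Cminus_iff C_iff)
next
  assume x: "length x = n \<and> height x = -1 \<and> (\<forall>k>0. prefix_height x k < 0)"
  then have below: "prefix_height x k < 0" if "0 < k" for k
    using that by blast
  then have "prefix_height x k \<le> 0" for k
    by (cases "k = 0") (simp_all add: less_imp_le)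
  moreover have "\<not> visits_twice x 0"
    using below unfolding visits_twice_def by (metis gr_zeroI less_irrefl not_less0)
  ultimately show "x \<in> Cminus n 1 0"
    using x by (auto simp: Cminus_iff C_iff intro: exI[of _ 0])
qed

lemma Cminus_1_1_iff:
  "y \<in> Cminus n 1 1 \<longleftrightarrow> length y = n \<and> height y = 1 \<and> (\<forall>k<length y. prefix_height y k \<le> 0)"
proof
  assume y: "y \<in> Cminus n 1 1"
  then have le: "\<forall>k. prefix_height y k \<le> 1" and once: "\<not> visits_twice y 1" and "height y = 1"
    by (simp_all add: Cminus_iff C_iff)
  moreover have "prefix_height y k \<le> 0" if "k < length y" for k
    using visits_onceD[OF once, of k "length y"] le[rule_format, of k] that \<open>height y = 1\<close> by force
  ultimately show "length y = n \<and> height y = 1 \<and> (\<forall>k<length y. prefix_height y k \<le> 0)"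
    using y by (simp add: Cminus_iff C_iff)
next
  assume y: "length y = n \<and> height y = 1 \<and> (\<forall>k<length y. prefix_height y k \<le> 0)"
  then have "prefix_height y k \<le> 1" for k
    using prefix_height_beyond[of y k] by (cases "k < length y") force+
  moreover have "\<not> visits_twice y 1"
  proof
    assume "visits_twice y 1"
    then obtain k1 k2 where "k1 < k2" "k2 \<le> length y" "prefix_height y k1 = 1"
      unfolding visits_twice_def by blast
    then show False
      using y[THEN conjunct2, THEN conjunct2, rule_format, of k1] by simp
  qed
  moreover have "prefix_height y (length y) = 1"
    using y by (simp del: prefix_height_length add: prefix_height_beyond)
  ultimately show "y \<in> Cminus n 1 1"
    using y by (auto simp: Cminus_iff C_iff)
qed

lemma Cminus_1_0_second_last_visit_exists:
  assumes "x \<in> Cminus n 1 0" "3 \<le> n"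
  shows "\<exists>j. second_last_visit x (-1) j"
proof -
  have x: "length x = n" "height x = -1" "\<forall>k>0. prefix_height x k < 0"
    using Cminus_1_0_iff[THEN iffD1, OF assms(1)] by simp_all
  have "prefix_height x 1 = -1"
    using x(3)[rule_format, of 1] prefix_height_Suc[of 0 x] x(1) assms(2) by (auto split: if_splits)
  moreover have "prefix_height x (length x - 1) = -2"
    using x(3)[rule_format, of "length x - 1"] prefix_height_Suc[of "length x - 1" x] x(1,2) assms(2)
    by (auto split: if_splits)
  moreover have "1 \<le> length x - 1"
    using x(1) assms(2) by simp
  ultimately have "\<exists>j\<ge>1. j < length x - 1 \<and> j < length x \<and> \<not> x ! j \<and> prefix_height x j = -1 \<and>
      (\<forall>k'. j < k' \<and> k' \<le> length x - 1 \<longrightarrow> prefix_height x k' < -1)"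
    by (intro last_down_crossing) simp_all
  then obtain j where j: "j < length x - 1" "prefix_height x j = -1"
    and after: "\<forall>k'. j < k' \<and> k' \<le> length x - 1 \<longrightarrow> prefix_height x k' < -1"
    by blast
  have "\<forall>k. j < k \<and> k \<le> length x \<and> k \<noteq> length x \<longrightarrow> prefix_height x k < -1"
    using after by auto
  then have "second_last_visit x (-1) j"
    unfolding second_last_visit_def using j x(2) by (intro conjI exI[of _ "length x"]) auto
  then show ?thesis ..
qed

lemma Cminus_1_0_second_last_visit_lex_step:
  assumes "x \<in> Cminus n 1 0" "second_last_visit x (-1) j"
  shows "lex_step 1 x j"
proof -
  have x: "height x = -1" "\<forall>k>0. prefix_height x k < 0"
    using Cminus_1_0_iff[THEN iffD1, OF assms(1)] by simp_all
  have dpath: "dpath x = x"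
    using x(1) by (simp add: dpath_def)
  have j: "j < length x" "\<not> x ! j" "prefix_height x j = -1"
    using assms(2) second_last_visit_down by (auto simp: second_last_visit_def)
  have after: "\<forall>k. j < k \<and> k < length x \<longrightarrow> prefix_height x k < -1"
    using second_last_visit_at_end[OF assms(2)] x(1) by simp
  have "0 < length x"
    using j(1) by (rule le_less_trans[OF le0])
  then have "0 \<in> downs x"
    using down_step_iff[of 0 x] x(2)[rule_format, of 1] by (simp add: downs_def)
  moreover have "scan_before x 0 j"
    using j by (simp add: scan_before_iff)
  moreover have "\<forall>j'\<in>downs x. scan_before x j' j \<longrightarrow> j' = 0"
  proof (intro ballI impI)
    fix j'
    assume "j' \<in> downs x" "scan_before x j' j"
    then have "j' < length x" "-1 < prefix_height x j' \<or> (prefix_height x j' = -1 \<and> j < j')"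
      using j(3) by (auto simp: downs_def scan_before_iff)
    then show "j' = 0"
      using after x(2)[rule_format, of j'] by (cases "j' = 0") auto
  qed
  ultimately show ?thesis
    using j by (intro lex_step_1I[OF j(1,2)]) (simp_all add: dpath)
qed

lemma Cminus_1_0_second_last_visit_flip:
  assumes "x \<in> Cminus n 1 0" "second_last_visit x (-1) j"
  shows "x[j := True] \<in> Cminus n 1 1"
proof -
  have x: "length x = n" "height x = -1" "\<forall>k>0. prefix_height x k < 0"
    using Cminus_1_0_iff[THEN iffD1, OF assms(1)] by simp_all
  have j: "j < length x" "\<not> x ! j"
    using assms(2) second_last_visit_down by (auto simp: second_last_visit_def)
  have after: "\<forall>k. j < k \<and> k < length x \<longrightarrow> prefix_height x k < -1"
    using second_last_visit_at_end[OF assms(2)] x(2) by simp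
  have "prefix_height (x[j := True]) k \<le> 0" if "k < length x" for k
    using x(3)[rule_format, of k] after that j by (cases k) (auto simp: prefix_height_flip_up)
  then show ?thesis
    using x j by (intro Cminus_1_1_iff[THEN iffD2]) (simp add: height_flip_up)
qed

lemma Cminus_1_1_flip_onto:
  assumes "y \<in> Cminus n 1 1" "3 \<le> n"
  shows "\<exists>x\<in>Cminus n 1 0. \<exists>j. second_last_visit x (-1) j \<and> x[j := True] = y"
proof -
  have y: "length y = n" "height y = 1" "\<forall>k<length y. prefix_height y k \<le> 0"
    using Cminus_1_1_iff[THEN iffD1, OF assms(1)] by simp_all
  have "prefix_height y 1 = -1"
    using y(3)[rule_format, of 1] prefix_height_Suc[of 0 y] y(1) assms(2) by (auto split: if_splits)
  then obtain j where j: "1 \<le> j" "j < length y" "y ! j" "prefix_height y j = -1"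
    and below: "\<forall>k'. 1 \<le> k' \<and> k' \<le> j \<longrightarrow> prefix_height y k' < 0"
    using first_up_crossing[of y 1 0 "length y"] y(1,2) assms(2) by auto
  define x where "x = y[j := False]"
  have ph: "prefix_height x k = prefix_height y k - (if j < k then 2 else 0)" for k
    using j by (simp add: x_def prefix_height_flip_down)
  have lx: "length x = length y"
    by (simp add: x_def)
  have "prefix_height x k < -1" if "j < k" "k < length x" for k
    using y(3)[rule_format, of k] that by (simp add: ph lx)
  then have "second_last_visit x (-1) j"
    unfolding second_last_visit_def using j y(2) by (intro conjI exI[of _ "length x"]) (auto simp: ph lx)
  moreover have "x \<in> Cminus n 1 0"
  proof -
    have le: "prefix_height y k \<le> 1" for k
      using y(2,3) prefix_height_beyond[of y k] by (cases "k < length y") force+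
    have "prefix_height x k < 0" if "0 < k" for k
      using below[rule_format, of k] le[of k] that by (auto simp: ph)
    moreover have "height x = -1"
      using j y(2) by (simp add: x_def height_list_update)
    ultimately show ?thesis
      using y(1) lx by (intro Cminus_1_0_iff[THEN iffD2]) simp
  qed
  moreover have "x[j := True] = y"
    using j(3) list_update_id[of y j] by (simp add: x_def)
  ultimately show ?thesis
    by blast
qed

lemma perfect_matching_Cminus_1:
  assumes "3 \<le> n"
  shows "perfect_matching_between (edges_between (Mlex n 1) (Cminus n 1 0) (Cminus n 1 1))
    (Cminus n 1 0) (Cminus n 1 1)"
proof (rule perfect_matching_Mlex[where P = "\<lambda>x. second_last_visit x (-1)" and c = "-1"])
  show "length x = n \<and> height x = -1" if "x \<in> Cminus n 1 0" for x
    using Cminus_1_0_iff[THEN iffD1, OF that] by simp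
  show "height y = -1 + 2" if "y \<in> Cminus n 1 1" for y
    using Cminus_1_1_iff[THEN iffD1, OF that] by simp
  show "\<exists>j. second_last_visit x (-1) j" if "x \<in> Cminus n 1 0" for x
    using Cminus_1_0_second_last_visit_exists[OF that assms] .
  show "lex_step 1 x j \<and> x[j := True] \<in> Cminus n 1 1"
    if "x \<in> Cminus n 1 0" "second_last_visit x (-1) j" for x j
    using Cminus_1_0_second_last_visit_lex_step[OF that] Cminus_1_0_second_last_visit_flip[OF that] ..
  show "\<exists>x\<in>Cminus n 1 0. \<exists>j. second_last_visit x (-1) j \<and> x[j := True] = y"
    if "y \<in> Cminus n 1 1" for y
    using Cminus_1_1_flip_onto[OF that assms] .
  fix x1 x2 j1 j2
  assume x: "x1 \<in> Cminus n 1 0" "x2 \<in> Cminus n 1 0"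
    and j: "second_last_visit x1 (-1) j1" "second_last_visit x2 (-1) j2"
    and "x1[j1 := True] = x2[j2 := True]"
  have "prefix_height x k \<le> -1" if "x \<in> Cminus n 1 0" "0 < k" for x k
  proof -
    have "prefix_height x k < 0"
      using Cminus_1_0_iff[THEN iffD1, OF that(1)] that(2) by blast
    then show ?thesis
      by simp
  qed
  then have "\<forall>k>0. prefix_height x1 k \<le> -1" "\<forall>k>0. prefix_height x2 k \<le> -1"
    using x by blast+
  then show "x1 = x2"
    using j second_last_visit_down[OF j(1)] second_last_visit_down[OF j(2)] \<open>x1[j1 := True] = x2[j2 := True]\<close>
    by (intro flip_up_inj[of j1 x1 "-1" j2 x2]) (auto simp: second_last_visit_def)
qed

section \<open>Rotation of Dyck words and the matching Z02\<close>

lemma Dyck_Cons_split: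
  assumes "u \<in> Dyck" "u \<noteq> []"
  shows "\<exists>a b. a \<in> Dyck \<and> b \<in> Dyck \<and> u = False # a @ True # b"
proof -
  obtain c u' where u: "u = c # u'"
    using assms(2) by (cases u) auto
  have "\<not> c"
    using Dyck_prefix_height[OF assms(1), of 1] by (auto simp: u prefix_height_Cons)
  then have ph: "prefix_height u (Suc k) = prefix_height u' k - 1" for k
    by (simp add: u prefix_height_Cons)
  have "height u' = 1"
    using Dyck_height[OF assms(1)] \<open>\<not> c\<close> by (simp add: u)
  then obtain a b where a: "a \<in> Dyck" and u': "u' = a @ True # b"
    using Dyck_True_split[of u' "length u'"] by auto
  have "prefix_height b l \<le> 0" for l
    using Dyck_prefix_height[OF assms(1), of "Suc (Suc (length a + l))"] a
    by (simp add: ph u' prefix_height_Dyck_append)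
  moreover have "height b = 0"
    using \<open>height u' = 1\<close> a by (simp add: u' Dyck_height)
  ultimately show ?thesis
    using a \<open>\<not> c\<close> by (auto simp: u u' Dyck_iff)
qed

lemma Dyck_wrap:
  assumes "a \<in> Dyck" "b \<in> Dyck"
  shows "False # a @ True # b \<in> Dyck"
proof -
  have "prefix_height (False # a @ True # b) k \<le> 0" for k
  proof (cases k)
    case (Suc m)
    have "prefix_height (a @ True # b) m \<le> 1"
      using Dyck_prefix_height[OF assms(1), of m] Dyck_prefix_height[OF assms(2), of "m - length a - 1"]
      by (simp add: prefix_height_Dyck_append[OF assms(1)])
    then show ?thesis
      using Suc by (simp add: prefix_height_Cons)
  qed simp
  then show ?thesis
    using assms by (simp add: Dyck_iff Dyck_height)
qed

lemma Dyck_rotated: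
  assumes "a \<in> Dyck" "b \<in> Dyck"
  shows "a @ False # b @ [True] \<in> Dyck"
proof -
  have "prefix_height (b @ [True]) m \<le> 1" for m
    using Dyck_prefix_height[OF assms(2), of m]
    by (simp add: prefix_height_append prefix_height_Cons Dyck_height[OF assms(2)])
  then have "prefix_height (a @ False # b @ [True]) k \<le> 0" for k
    using Dyck_prefix_height[OF assms(1), of k] by (simp add: prefix_height_Dyck_append[OF assms(1)])
  then show ?thesis
    using assms by (simp add: Dyck_iff Dyck_height)
qed

lemma rot_Nil [simp]: "rot [] = []"
  by (simp add: rot_def)

lemma rot_wrap:
  assumes "a \<in> Dyck" "b \<in> Dyck"
  shows "rot (False # a @ True # b) = a @ False # b @ [True]"
proof -
  have "(THE w. \<exists>u v. u \<in> Dyck \<and> v \<in> Dyck \<and> False # a @ True # b = False # u @ True # v \<and>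
      w = u @ False # v @ [True]) = a @ False # b @ [True]"
  proof (rule the_equality)
    fix w
    assume "\<exists>u v. u \<in> Dyck \<and> v \<in> Dyck \<and> False # a @ True # b = False # u @ True # v \<and>
      w = u @ False # v @ [True]"
    then obtain u v where "u \<in> Dyck" "a @ True # b = u @ True # v" "w = u @ False # v @ [True]"
      by auto
    then show "w = a @ False # b @ [True]"
      using Dyck_split_unique[of a u True b True v] assms(1) by simp
  qed (use assms in blast)
  then show ?thesis
    by (simp add: rot_def)
qed

lemma rot_Dyck:
  assumes "u \<in> Dyck"
  shows "rot u \<in> Dyck \<and> length (rot u) = length u"
proof (cases "u = []")
  case False
  then obtain a b where "a \<in> Dyck" "b \<in> Dyck" "u = False # a @ True # b"
    using Dyck_Cons_split assms by blast
  then show ?thesis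
    by (simp add: rot_wrap Dyck_rotated)
qed simp

lemma inj_on_rot: "inj_on rot Dyck"
proof (rule inj_onI)
  fix u1 u2
  assume u: "u1 \<in> Dyck" "u2 \<in> Dyck" "rot u1 = rot u2"
  show "u1 = u2"
  proof (cases "u1 = [] \<or> u2 = []")
    case True
    then show ?thesis
      using rot_Dyck[OF u(1)] rot_Dyck[OF u(2)] u(3) by (metis length_0_conv rot_Nil)
  next
    case False
    then obtain a1 b1 a2 b2 where ab: "a1 \<in> Dyck" "b1 \<in> Dyck" "u1 = False # a1 @ True # b1"
      "a2 \<in> Dyck" "b2 \<in> Dyck" "u2 = False # a2 @ True # b2"
      using Dyck_Cons_split u(1,2) by meson
    then have "a1 @ False # b1 = a2 @ False # b2"
      using u(3) by (simp add: rot_wrap)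
    then show ?thesis
      using Dyck_split_unique[of a1 a2 False b1 False b2] ab by (simp add: Dyck_prefix_height)
  qed
qed

lemma rot_surj: "w \<in> Dyck \<Longrightarrow> \<exists>u\<in>Dyck. rot u = w"
proof (cases "w = []")
  case False
  assume w: "w \<in> Dyck"
  define w' where "w' = butlast w"
  have w_eq: "w = w' @ [last w]"
    using False by (simp add: w'_def)
  have "prefix_height w' k = prefix_height w (min k (length w'))" for k
    by (subst w_eq) (simp add: prefix_height_append min_def prefix_height_beyond)
  then have le: "\<forall>k. prefix_height w' k \<le> 0"
    using Dyck_prefix_height[OF w] by simp
  have "height w' + (if last w then 1 else -1) = 0"
    using Dyck_height[OF w] w_eq by (metis height_Cons height_Nil height_append add.right_neutral)
  then have "last w" "height w' = -1"
    using le[rule_format, of "length w'"] by (auto split: if_splits)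
  then obtain a r where "a \<in> Dyck" "w' = a @ False # r" "\<forall>k. prefix_height r k \<le> 0" "height r = 0"
    using Dyck_False_split[OF le] by auto
  moreover from this have "r \<in> Dyck"
    by (simp add: Dyck_iff)
  ultimately show ?thesis
    using w_eq \<open>last w\<close> Dyck_wrap by (intro bexI[of _ "False # a @ True # r"]) (simp_all add: rot_wrap)
qed (use Dyck_Nil rot_Nil in blast)

lemma rot_adj: "u \<in> Dyck \<Longrightarrow> hyp_adj (False # rot u) (u @ [True])"
proof (cases "u = []")
  case True
  then show ?thesis
    using hyp_adj_list_update[of 0 "[False]" True] by simp
next
  case False
  assume "u \<in> Dyck"
  then obtain a b where "a \<in> Dyck" "b \<in> Dyck" "u = False # a @ True # b"
    using Dyck_Cons_split False by blast
  moreover have "hyp_adj ((False # a) @ [False] @ (b @ [True])) ((False # a) @ [True] @ (b @ [True]))"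
    using hyp_adj_list_update[of 0 "[False]" True] by (intro hyp_adj_append_context) simp
  ultimately show ?thesis
    by (simp add: rot_wrap)
qed

lemma join_append:
  "us \<noteq> [] \<Longrightarrow> vs \<noteq> [] \<Longrightarrow>
   join i (us @ vs) = join i us @ (length us \<le> i) # join (i - length us) vs"
proof (induction us arbitrary: i rule: induct_list012)
  case (2 u)
  then show ?case
    by (cases vs) auto
next
  case (3 u v us)
  then show ?case
    by (cases i) auto
qed simp

lemma join_cong_index:
  "length us \<le> Suc i \<Longrightarrow> length us \<le> Suc i' \<Longrightarrow> join i us = join i' us"
  unfolding join_def by (intro arg_cong[where f = concat] map_cong) auto

definition z_factors :: "nat \<Rightarrow> bool list list \<Rightarrow> bool list list" where
  "z_factors i us = us[i - 1 := [], i := rot (us ! (i - 1))]"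

lemma length_z_factors [simp]: "length (z_factors i us) = length us"
  by (simp add: z_factors_def)

lemma z_factors_nth:
  "0 < i \<Longrightarrow> i < length us \<Longrightarrow>
   z_factors i us ! k = (if k = i then rot (us ! (i - 1)) else if k = i - 1 then [] else us ! k)"
  by (simp add: z_factors_def nth_list_update)

lemma z_factors_Dyck: "set us \<subseteq> Dyck \<Longrightarrow> 0 < i \<Longrightarrow> i < length us \<Longrightarrow> set (z_factors i us) \<subseteq> Dyck"
  unfolding z_factors_def using rot_Dyck[of "us ! (i - 1)"]
  by (metis Dyck_Nil diff_less insert_subset less_trans nth_mem order_trans set_update_subset_insert
      subset_code(1) zero_less_one)

lemma join_z_factors:
  assumes "1 < i" "i < h" "length us = Suc h" "us ! i = []"
  shows "\<exists>A W. join i us = A @ True # us ! (i - 1) @ True # False # W \<and>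
           join (i - 1) (z_factors i us) = A @ True # False # rot (us ! (i - 1)) @ False # W"
proof -
  define P u Q where "P = take (i - 1) us" and "u = us ! (i - 1)" and "Q = drop (Suc i) us"
  have "drop i us = [] # Q"
    using assms Cons_nth_drop_Suc[of i us] by (simp add: Q_def)
  moreover have "drop (i - 1) us = u # drop i us"
    using assms Cons_nth_drop_Suc[of "i - 1" us] by (simp add: u_def)
  ultimately have us: "us = P @ u # [] # Q"
    using append_take_drop_id[of "i - 1" us] by (simp add: P_def)
  have P: "length P = i - 1" "P \<noteq> []"
    using assms by (auto simp: P_def)
  obtain q Q' where Q: "Q = q # Q'"
    using assms by (cases Q) (auto simp: Q_def)
  have "z_factors i us = P @ [] # rot u # Q"
    using P assms(1) by (auto simp: z_factors_def u_def[symmetric] us list_update_append nth_append)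
  moreover have "join i P = join (i - 1) P"
    using P(1) by (intro join_cong_index) simp_all
  ultimately show ?thesis
    using P assms(1)
    by (intro exI[of _ "join (i - 1) P"] exI[of _ "join 0 Q"]) (simp add: us join_append Q nth_append)
qed

lemma zmap_join:
  assumes "length us = Suc h" "set us \<subseteq> Dyck" "us ! i = []"
  shows "zmap h i (join i us) = join (i - 1) (z_factors i us)"
  unfolding zmap_def
proof (rule the_equality)
  fix z
  assume "\<exists>us'. length us' = Suc h \<and> set us' \<subseteq> Dyck \<and> join i us = join i us' \<and> us' ! i = [] \<and>
    z = join (i - 1) (us'[i - 1 := [], i := rot (us' ! (i - 1))])"
  then obtain us' where "length us' = Suc h" "set us' \<subseteq> Dyck" "join i us = join i us'"
    "z = join (i - 1) (z_factors i us')"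
    by (auto simp: z_factors_def)
  then show "z = join (i - 1) (z_factors i us)"
    using join_inj[of us us' i] assms by simp
qed (use assms in \<open>auto simp: z_factors_def\<close>)

lemma zmap_Cminus:
  assumes "y \<in> Cminus n h i" "1 < i" "i < h"
  shows "zmap h i y \<in> Cminus n h (i - 1) \<and> hyp_adj (zmap h i y) y"
proof -
  obtain us where us: "length y = n" "length us = Suc h" "set us \<subseteq> Dyck" "y = join i us" "us ! i = []"
    using assms(1) by (auto simp: Cminus_def)
  have u: "us ! (i - 1) \<in> Dyck"
    using us(2,3) assms(3) by (simp add: subset_code(1))
  obtain A W where y: "y = A @ True # us ! (i - 1) @ True # False # W"
    and z: "zmap h i y = A @ True # False # rot (us ! (i - 1)) @ False # W"
    using join_z_factors[OF assms(2,3) us(2,5)] zmap_join[OF us(2,3,5)] us(4) by auto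
  have "length (zmap h i y) = n"
    unfolding z using us(1) rot_Dyck[OF u] y by simp
  moreover have "set (z_factors i us) \<subseteq> Dyck" "z_factors i us ! (i - 1) = []"
    using us(2,3) assms(2,3) by (auto simp: z_factors_Dyck z_factors_nth)
  ultimately have "zmap h i y \<in> Cminus n h (i - 1)"
    using zmap_join[OF us(2,3,5)] us(2,4) assms(3) unfolding Cminus_def
    by (auto intro!: exI[of _ "z_factors i us"])
  moreover have "hyp_adj ((A @ [True]) @ (False # rot (us ! (i - 1))) @ (False # W))
      ((A @ [True]) @ (us ! (i - 1) @ [True]) @ (False # W))"
    using rot_adj[OF u] by (rule hyp_adj_append_context)
  then have "hyp_adj (zmap h i y) y"
    unfolding z by (subst y) simp
  ultimately show ?thesis
    by blast
qed

lemma inj_on_zmap: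
  assumes "1 < i" "i < h"
  shows "inj_on (zmap h i) (Cminus n h i)"
proof (rule inj_onI)
  fix y1 y2
  assume y: "y1 \<in> Cminus n h i" "y2 \<in> Cminus n h i" "zmap h i y1 = zmap h i y2"
  obtain us1 where us1: "length us1 = Suc h" "set us1 \<subseteq> Dyck" "y1 = join i us1" "us1 ! i = []"
    using y(1) by (auto simp: Cminus_def)
  obtain us2 where us2: "length us2 = Suc h" "set us2 \<subseteq> Dyck" "y2 = join i us2" "us2 ! i = []"
    using y(2) by (auto simp: Cminus_def)
  have z: "z_factors i us1 = z_factors i us2"
    using y(3) zmap_join[OF us1(1,2,4)] zmap_join[OF us2(1,2,4)] us1 us2 assms
    by (intro join_inj[of _ _ "i - 1"]) (simp_all add: z_factors_Dyck)
  have z_nth: "z_factors i us1 ! k = z_factors i us2 ! k" for k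
    using z by simp
  have "rot (us1 ! (i - 1)) = rot (us2 ! (i - 1))"
    using z_nth[of i] us1(1) us2(1) assms by (simp add: z_factors_nth)
  then have "us1 ! (i - 1) = us2 ! (i - 1)"
    using inj_on_rot us1(1,2) us2(1,2) assms by (simp add: inj_on_eq_iff subset_code(1))
  moreover have "us1 ! k = us2 ! k" if "k \<noteq> i" "k \<noteq> i - 1" "k < length us1" for k
    using z_nth[of k] that us1(1) us2(1) assms by (simp add: z_factors_nth)
  ultimately have "us1 = us2"
    using us1(1,4) us2(1,4) by (metis nth_equalityI)
  then show "y1 = y2"
    using us1(3) us2(3) by simp
qed

lemma zmap_onto:
  assumes "x \<in> Cminus n h (i - 1)" "1 < i" "i < h"
  shows "\<exists>y\<in>Cminus n h i. zmap h i y = x"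
proof -
  obtain ws where ws: "length x = n" "length ws = Suc h" "set ws \<subseteq> Dyck" "x = join (i - 1) ws"
    "ws ! (i - 1) = []"
    using assms(1) by (auto simp: Cminus_def)
  obtain u where u: "u \<in> Dyck" "rot u = ws ! i"
    using rot_surj[of "ws ! i"] ws(2,3) assms(3) by (auto simp: subset_code(1))
  define us where "us = ws[i - 1 := u, i := []]"
  have "set us \<subseteq> insert [] (insert u (set ws))"
    unfolding us_def by (meson set_update_subset_insert insert_mono order_trans)
  then have us: "length us = Suc h" "us ! i = []" "us ! (i - 1) = u" "set us \<subseteq> Dyck"
    using ws(2,3) u(1) assms(2,3) by (auto simp: us_def nth_list_update)
  have "z_factors i us = ws"
    using us(1,3) ws(2,5) u(2) assms(2,3) by (intro nth_equalityI) (auto simp: z_factors_nth us_def)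
  then have "zmap h i (join i us) = x"
    using zmap_join[OF us(1,4,2)] ws(4) by simp
  moreover obtain A W where "join i us = A @ True # u @ True # False # W"
    "x = A @ True # False # rot u @ False # W"
    using join_z_factors[OF assms(2,3) us(1,2)] \<open>z_factors i us = ws\<close> ws(4) us(3) by auto
  then have "length (join i us) = n"
    using ws(1) rot_Dyck[OF u(1)] by simp
  then have "join i us \<in> Cminus n h i"
    using us assms(3) unfolding Cminus_def by auto
  ultimately show ?thesis
    by blast
qed

lemma perfect_matching_Z02:
  assumes "1 < i" "i < h"
  shows "perfect_matching_between (edges_between (Z02 n h i) (Cminus n h (i - 1)) (Cminus n h i))
    (Cminus n h (i - 1)) (Cminus n h i)"
proof -
  have into: "zmap h i ` Cminus n h i \<subseteq> Cminus n h (i - 1)"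
    using zmap_Cminus assms by blast
  moreover have "Cminus n h (i - 1) \<subseteq> zmap h i ` Cminus n h i"
    using zmap_onto[OF _ assms] by blast
  ultimately have bij: "bij_betw (zmap h i) (Cminus n h i) (Cminus n h (i - 1))"
    using inj_on_zmap[OF assms] by (simp add: bij_betw_def)
  have disj: "Cminus n h i \<inter> Cminus n h (i - 1) = {}"
    using assms by (auto simp: Cminus_iff C_iff)
  have adj: "hyp_adj y (zmap h i y)" if "y \<in> Cminus n h i" for y
    using zmap_Cminus[OF that assms] hyp_adj_sym by blast
  have "perfect_matching_between (Z02 n h i) (Cminus n h i) (Cminus n h (i - 1))"
    unfolding Z02_def by (rule perfect_matching_between_graph[OF disj bij adj])
  moreover have "edges_between (Z02 n h i) (Cminus n h (i - 1)) (Cminus n h i) = Z02 n h i"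
    unfolding edges_between_commute[of _ "Cminus n h (i - 1)"] Z02_def using into
    by (rule edges_between_graph)
  ultimately show ?thesis
    by (simp add: perfect_matching_between_commute)
qed

theorem lemma5:
  fixes n :: nat
  assumes "n \<ge> 3"
  shows "(\<forall>h i. i < h \<and> h \<le> n \<longrightarrow>
            perfect_matching_between (edges_between (Mlex n 0) (C n h i) (C n h (i + 1)))
              (C n h i) (C n h (i + 1)))
       \<and> perfect_matching_between (edges_between (Mlex n 1) (Cminus n 1 0) (Cminus n 1 1))
              (Cminus n 1 0) (Cminus n 1 1)
       \<and> (\<forall>h i. i \<le> h \<and> h \<le> n - 2 \<longrightarrow>
            perfect_matching_between (edges_between (Mlex n 1) (Cplus n h i) (Cminus n (h + 2) (i + 2)))
              (Cplus n h i) (Cminus n (h + 2) (i + 2))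
          \<and> perfect_matching_between (edges_between (Mlex n 1) (Cplus n h i) (Cminus n (h + 2) i))
              (Cplus n h i) (Cminus n (h + 2) i))
       \<and> (\<forall>h i. 1 < i \<and> i < h \<and> h \<le> n \<longrightarrow>
            perfect_matching_between (edges_between (Z02 n h i) (Cminus n h (i - 1)) (Cminus n h i))
              (Cminus n h (i - 1)) (Cminus n h i))"
proof -
  have swapped: "perfect_matching_between (edges_between (Mlex n 1) (Cplus n h i) (Cminus n (h + 2) i))
      (Cplus n h i) (Cminus n (h + 2) i)" if "i \<le> h" for h i
    using perfect_matching_between_commute[OF perfect_matching_Cminus_Cplus[OF that]]
    by (simp only: edges_between_commute[of _ "Cplus n h i"])
  show ?thesis
    using assms
    by (intro conjI allI impI perfect_matching_C perfect_matching_Cminus_1 perfect_matching_Cplus_Cminus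
        perfect_matching_Z02 swapped) auto
qed

end
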